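(* Let $C>0$ and $\delta>0$, let $f \in C((0,\infty);(0,\infty))$ be asymptotically increasing with $\lim_{x\to\infty} f(x)/x = \infty$, and let $\psi \in C([-\delta,0];(0,\infty))$. Suppose \[ \int_\eta^\infty \frac{du}{\sqrt{\int_0^u f(s)\,ds}} = \infty \quad \text{for all } \eta>0. \] Then solutions of \[ z'(t) = C\int_{t-\delta}^t f(z(s))\,ds, \quad t\ge 0; \qquad z(t)=\psi(t), \quad t\in[-\delta,0], \] satisfy $z \in C([-\delta,\infty);(0,\infty))$. Similarly, if $w \in C([0,\infty);[0,\infty))$ with $w(0)>0$, then solutions of \[ y'(t) = \int_{t-\delta}^t w(t-s) f(y(s))\,ds, \quad t \ge 0; \qquad y(t)=\psi(t), \quad t\in[-\delta,0], \] satisfy $y \in C([-\delta,\infty);(0,\infty))$.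
   Context: "$f$ is asymptotically increasing" means that there is a continuous increasing function $\phi:(0,\infty)\to(0,\infty)$ with $f(x)/\phi(x)\to 1$ as $x\to\infty$. *)

theory Defs
  imports "HOL-Analysis.Analysis"
begin

definition asymp_increasing :: "(real \<Rightarrow> real) \<Rightarrow> bool" where
  "asymp_increasing f \<longleftrightarrow>
     (\<exists>\<phi>. continuous_on {0<..} \<phi> \<and> strict_mono_on {0<..} \<phi> \<and>
          (\<forall>x>0. \<phi> x > 0) \<and> ((\<lambda>x. f x / \<phi> x) \<longlongrightarrow> 1) at_top)"

text \<open>Solution of z'(t) = C * int_{t-delta}^t f(z(s)) ds for t in I (I = [0,T) or [0,inf)),
  z = psi on [-delta,0]; z continuous and positive on [-delta,0] union I.
  The derivative at t is taken within I (one-sided at t = 0).\<close>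
definition dde_sol1 ::
  "real \<Rightarrow> real \<Rightarrow> (real \<Rightarrow> real) \<Rightarrow> (real \<Rightarrow> real) \<Rightarrow> real set \<Rightarrow> (real \<Rightarrow> real) \<Rightarrow> bool" where
  "dde_sol1 C \<delta> f \<psi> I z \<longleftrightarrow>
     continuous_on ({-\<delta>..0} \<union> I) z \<and>
     (\<forall>t\<in>{-\<delta>..0} \<union> I. 0 < z t) \<and>
     (\<forall>t\<in>{-\<delta>..0}. z t = \<psi> t) \<and>
     (\<forall>t\<in>I. (z has_real_derivative (C * integral {t-\<delta>..t} (\<lambda>s. f (z s)))) (at t within I))"

definition dde_sol2 ::
  "real \<Rightarrow> (real \<Rightarrow> real) \<Rightarrow> (real \<Rightarrow> real) \<Rightarrow> (real \<Rightarrow> real) \<Rightarrow> real set \<Rightarrow> (real \<Rightarrow> real) \<Rightarrow> bool" where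
  "dde_sol2 \<delta> w f \<psi> I y \<longleftrightarrow>
     continuous_on ({-\<delta>..0} \<union> I) y \<and>
     (\<forall>t\<in>{-\<delta>..0} \<union> I. 0 < y t) \<and>
     (\<forall>t\<in>{-\<delta>..0}. y t = \<psi> t) \<and>
     (\<forall>t\<in>I. (y has_real_derivative (integral {t-\<delta>..t} (\<lambda>s. w (t - s) * f (y s)))) (at t within I))"

end

theory Submission
  imports Defs "HOL-Complex_Analysis.Great_Picard"
begin

text \<open>
  The right-hand side is nonnegative, so solutions are nondecreasing and stay above their initial
  minimum. Near infinity \<open>f\<close> is comparable to a continuous increasing function, which yields a
  continuous increasing majorant \<open>G \<le> 4 f + B\<close>; the memory term is then bounded by
  \<open>K (P0 + \<integral>\<^sub>a\<^sup>t G(z))\<close>. Comparing \<open>z\<close> with the system \<open>Y' = K P\<close>, \<open>P' = G(Y)\<close>, whose energy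
  \<open>K P\<^sup>2 - 2 \<integral>\<^sup>Y G\<close> is nonincreasing, shows that reaching height \<open>R\<close> takes time at least
  \<open>\<integral>\<^sup>R du / sqrt (K (K P0\<^sup>2 + 2 \<integral>\<^sup>u G))\<close>, and by the Osgood condition this diverges as
  \<open>R \<rightarrow> \<infinity>\<close>. Hence solutions are bounded on bounded intervals.

  Solutions on a bounded interval are obtained by the method of steps for the equation with an
  extra lag \<open>h\<close>, followed by Arzela-Ascoli as \<open>h \<rightarrow> 0\<close>; the a priori bound makes the
  approximations equibounded and equi-Lipschitz. Gluing such pieces gives global solutions, and a
  solution on \<open>[0, T)\<close>, being monotone and bounded, has a limit at \<open>T\<close> and continues beyond it.
\<close>

lemma DERIV_nonneg_imp_le_within:
  fixes f f' :: "real \<Rightarrow> real"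
  assumes fc: "continuous_on {a..b} f"
    and fd: "\<And>t. t \<in> {a..b} \<Longrightarrow> (f has_real_derivative f' t) (at t within {a..b})"
    and nn: "\<And>t. t \<in> {a..b} \<Longrightarrow> f' t \<ge> 0"
    and st: "s \<in> {a..b}" "t \<in> {a..b}" "s \<le> t"
  shows "f s \<le> f t"
proof (rule DERIV_nonneg_imp_increasing_open[OF st(3)])
  fix x assume x: "s < x" "x < t"
  then have ab: "a < x" "x < b" using st by auto
  then have "(f has_real_derivative f' x) (at x)"
    using fd[of x] at_within_Icc_at[OF ab] by auto
  then show "\<exists>y. DERIV f x :> y \<and> y \<ge> 0" using nn[of x] ab by auto
next
  show "continuous_on {s..t} f" using fc by (rule continuous_on_subset) (use st in auto)
qed

lemma has_real_derivative_imp_continuous_on: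
  fixes f :: "real \<Rightarrow> real"
  assumes "\<And>t. t \<in> S \<Longrightarrow> (f has_real_derivative f' t) (at t within S)"
  shows "continuous_on S f"
  using assms DERIV_continuous continuous_on_eq_continuous_within by blast

lemma continuous_on_indefinite_integral_Ici:
  fixes G :: "real \<Rightarrow> real"
  assumes Gc: "continuous_on {c..} G"
  shows "continuous_on {c..} (\<lambda>u. integral {c..u} G)"
proof (clarsimp simp: continuous_on_eq_continuous_within)
  fix u assume u: "c \<le> u"
  have "continuous_on {c..u+1} (\<lambda>v. integral {c..v} G)"
    by (rule indefinite_integral_continuous_1[OF integrable_continuous_interval])
       (rule continuous_on_subset[OF Gc], auto)
  then have "continuous (at u within {c..u+1}) (\<lambda>v. integral {c..v} G)"
    using u by (simp add: continuous_on_eq_continuous_within)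
  moreover have "at u within {c..u+1} = at u within {c..}"
    by (rule at_within_nhd[where S="{..<u+1}"]) auto
  ultimately show "continuous (at u within {c..}) (\<lambda>v. integral {c..v} G)"
    by simp
qed

lemma continuous_on_Icc_upper_bound:
  fixes g :: "real \<Rightarrow> real"
  assumes "continuous_on {a..b} g"
  obtains B where "0 < B" "\<And>x. x \<in> {a..b} \<Longrightarrow> g x \<le> B"
proof -
  have "bounded (g ` {a..b})"
    by (rule compact_imp_bounded[OF compact_continuous_image[OF assms compact_Icc]])
  then obtain B where "0 < B" "\<And>x. x \<in> {a..b} \<Longrightarrow> norm (g x) \<le> B"
    unfolding bounded_pos by blast
  then show ?thesis using that by force
qed

lemma continuous_on_Icc_pos_lower_bound:
  fixes g :: "real \<Rightarrow> real"
  assumes gc: "continuous_on {a..b} g" and gp: "\<And>x. x \<in> {a..b} \<Longrightarrow> 0 < g x"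
  obtains m where "0 < m" "\<And>x. x \<in> {a..b} \<Longrightarrow> m \<le> g x"
proof (cases "a \<le> b")
  case True
  then obtain x where "x \<in> {a..b}" "\<And>y. y \<in> {a..b} \<Longrightarrow> g x \<le> g y"
    using continuous_attains_inf[OF compact_Icc _ gc] by auto
  then show ?thesis using that gp by blast
qed (rule that[of 1], auto)

lemma integral_subinterval_le:
  fixes F :: "real \<Rightarrow> real"
  assumes Fc: "continuous_on {D..t} F" and Fnn: "\<And>x. x \<in> {D..t} \<Longrightarrow> F x \<ge> 0"
    and le: "D \<le> x" "x \<le> y" "y \<le> t"
  shows "integral {x..y} F \<le> integral {D..t} F"
proof -
  have int: "F integrable_on {D..t}" by (rule integrable_continuous_interval[OF Fc])
  have "integral {D..t} F = integral {D..y} F + integral {y..t} F"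
    using Henstock_Kurzweil_Integration.integral_combine[OF _ _ int, of y] le by simp
  moreover have "integral {D..y} F = integral {D..x} F + integral {x..y} F"
    using Henstock_Kurzweil_Integration.integral_combine[OF _ _ integrable_subinterval_real[OF int], of D x y] le
    by simp
  moreover have "integral {D..x} F \<ge> 0"
    by (rule integral_nonneg[OF integrable_subinterval_real[OF int]]) (use le Fnn in auto)
  moreover have "integral {y..t} F \<ge> 0"
    by (rule integral_nonneg[OF integrable_subinterval_real[OF int]]) (use le Fnn in auto)
  ultimately show ?thesis by simp
qed

lemma integral_equation_imp_has_derivative:
  fixes g u :: "real \<Rightarrow> real"
  assumes gc: "continuous_on {a..b} g"
    and ueq: "\<And>t. t \<in> {a..b} \<Longrightarrow> u t = c + integral {a..t} g"
    and t: "t \<in> {a..b}"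
  shows "(u has_real_derivative g t) (at t within {a..b})"
proof -
  have "((\<lambda>x. c + integral {a..x} g) has_real_derivative (0 + g t)) (at t within {a..b})"
    by (intro DERIV_add DERIV_const integral_has_real_derivative gc t)
  then have "((\<lambda>x. c + integral {a..x} g) has_real_derivative g t) (at t within {a..b})" by simp
  then show ?thesis
    by (rule has_field_derivative_transform_within[where d=1]) (use t ueq in auto)
qed

lemma integral_equation_lipschitz:
  fixes g u :: "real \<Rightarrow> real"
  assumes gc: "continuous_on {a..b} g" and ueq: "\<And>t. t \<in> {a..b} \<Longrightarrow> u t = c + integral {a..t} g"
    and gb: "\<And>s. s \<in> {a..b} \<Longrightarrow> \<bar>g s\<bar> \<le> \<Lambda>"
    and st: "s \<in> {a..b}" "t \<in> {a..b}"
  shows "\<bar>u t - u s\<bar> \<le> \<Lambda> * \<bar>t - s\<bar>"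
proof -
  have gi: "g integrable_on {x..y}" if "a \<le> x" "y \<le> b" for x y
    by (rule integrable_continuous_interval, rule continuous_on_subset[OF gc]) (use that in auto)
  have *: "\<bar>u y - u x\<bar> \<le> \<Lambda> * (y - x)" if xy: "x \<in> {a..b}" "y \<in> {a..b}" "x \<le> y" for x y
  proof -
    have "integral {a..x} g + integral {x..y} g = integral {a..y} g"
      by (rule Henstock_Kurzweil_Integration.integral_combine) (use xy in \<open>auto intro!: gi\<close>)
    then have "u y - u x = integral {x..y} g" using ueq xy by simp
    moreover have "norm (integral {x..y} g) \<le> integral {x..y} (\<lambda>_. \<Lambda>)"
      by (rule integral_norm_bound_integral) (use xy gb in \<open>auto intro!: gi\<close>)
    ultimately show ?thesis using xy by (simp add: mult.commute)
  qed
  show ?thesis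
  proof (cases "s \<le> t")
    case True then show ?thesis using *[OF st True] by simp
  next
    case False then show ?thesis using *[OF st(2,1)] by (simp add: abs_minus_commute)
  qed
qed

lemma integral_equation_limit:
  fixes g :: "nat \<Rightarrow> real \<Rightarrow> real" and u :: "nat \<Rightarrow> real"
  assumes gc: "\<And>n. continuous_on {a..t} (g n)" and lim: "uniform_limit {a..t} g G sequentially"
    and ueq: "\<And>n. u n = c + integral {a..t} (g n)" and u: "u \<longlonglongrightarrow> x"
  shows "x = c + integral {a..t} G"
proof -
  obtain I J where I: "\<And>n. (g n has_integral I n) {a..t}" and J: "(G has_integral J) {a..t}"
    and IJ: "I \<longlonglongrightarrow> J"
    using uniform_limit_integral[OF lim gc trivial_limit_sequentially] by blast
  have "u = (\<lambda>n. c + I n)" using ueq I by (auto simp: integral_unique)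
  then have "u \<longlonglongrightarrow> c + J" using IJ by (simp add: tendsto_add)
  then show ?thesis using u J LIMSEQ_unique integral_unique by metis
qed

lemma Arzela_Ascoli_lipschitz:
  fixes U :: "nat \<Rightarrow> real \<Rightarrow> real"
  assumes bnd: "\<And>n x. x \<in> {a..b} \<Longrightarrow> \<bar>U n x\<bar> \<le> B"
    and lip: "\<And>n x y. x \<in> {a..b} \<Longrightarrow> y \<in> {a..b} \<Longrightarrow> \<bar>U n x - U n y\<bar> \<le> \<Lambda> * \<bar>x - y\<bar>"
    and \<Lambda>: "0 \<le> \<Lambda>"
  obtains g r where "continuous_on {a..b} g" "strict_mono (r :: nat \<Rightarrow> nat)"
    "uniform_limit {a..b} (\<lambda>n. U (r n)) g sequentially"
proof -
  obtain g r where "continuous_on {a..b} g" "strict_mono (r :: nat \<Rightarrow> nat)"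
    and conv: "\<And>e. 0 < e \<Longrightarrow> \<exists>N. \<forall>n x. n \<ge> N \<and> x \<in> {a..b} \<longrightarrow> norm (U (r n) x - g x) < e"
  proof (rule Arzela_Ascoli[of "{a..b}" U B])
    fix x e assume x: "x \<in> {a..b}" and e: "(0::real) < e"
    show "\<exists>d>0. \<forall>n y. y \<in> {a..b} \<and> norm (x - y) < d \<longrightarrow> norm (U n x - U n y) < e"
    proof (intro exI[of _ "e / (\<Lambda> + 1)"] conjI allI impI)
      show "e / (\<Lambda> + 1) > 0" using e \<Lambda> by simp
      fix n y assume y: "y \<in> {a..b} \<and> norm (x - y) < e / (\<Lambda> + 1)"
      have "\<bar>U n x - U n y\<bar> \<le> \<Lambda> * \<bar>x - y\<bar>" using lip x y by blast
      also have "\<dots> \<le> \<Lambda> * (e / (\<Lambda> + 1))" using y \<Lambda> by (intro mult_left_mono) auto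
      also have "\<dots> < e" using e \<Lambda> by (simp add: field_simps)
      finally show "norm (U n x - U n y) < e" by simp
    qed
  qed (use bnd in auto)
  moreover have "uniform_limit {a..b} (\<lambda>n. U (r n)) g sequentially"
    unfolding uniform_limit_sequentially_iff dist_norm
  proof (intro allI impI)
    fix e :: real assume "0 < e"
    then obtain N where "\<forall>n x. n \<ge> N \<and> x \<in> {a..b} \<longrightarrow> norm (U (r n) x - g x) < e" using conv by blast
    then show "\<exists>N. \<forall>n\<ge>N. \<forall>x\<in>{a..b}. norm (U (r n) x - g x) < e" by blast
  qed
  ultimately show ?thesis using that by blast
qed

lemma has_real_derivative_within_Un:
  fixes f :: "real \<Rightarrow> real"
  assumes "(f has_real_derivative D) (at x within S)" "(f has_real_derivative D) (at x within T)"
  shows "(f has_real_derivative D) (at x within (S \<union> T))"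
  using assms unfolding has_field_derivative_iff by (simp add: Lim_within_Un)

lemma mono_bounded_tendsto_at_left:
  fixes z :: "real \<Rightarrow> real"
  assumes mono: "\<And>s t. a \<le> s \<Longrightarrow> s \<le> t \<Longrightarrow> t < T \<Longrightarrow> z s \<le> z t"
    and bnd: "\<And>t. t \<in> {a..<T} \<Longrightarrow> z t \<le> R" and T: "a < T"
  shows "(z \<longlongrightarrow> (SUP t\<in>{a..<T}. z t)) (at_left T)"
proof (rule increasing_tendsto)
  have bdd: "bdd_above (z ` {a..<T})" using bnd by (intro bdd_aboveI[of _ R]) auto
  have zle: "z x \<le> (SUP t\<in>{a..<T}. z t)" if "x \<in> {a..<T}" for x by (rule cSUP_upper[OF that bdd])
  show "\<forall>\<^sub>F x in at_left T. z x \<le> (SUP t\<in>{a..<T}. z t)"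
    using eventually_at_left_real[OF T] by (rule eventually_mono) (auto intro: zle)
  fix y assume "y < (SUP t\<in>{a..<T}. z t)"
  then obtain t0 where t0: "t0 \<in> {a..<T}" "y < z t0" using less_cSUP_iff[OF _ bdd] T by auto
  have "y < z x" if "t0 < x" "x < T" for x using t0 mono[of t0 x] that by auto
  then show "\<forall>\<^sub>F x in at_left T. y < z x"
    using eventually_at_left_real[of t0 T] t0 by (auto elim!: eventually_mono)
qed

lemma continuous_on_close_at_left:
  fixes z :: "real \<Rightarrow> real"
  assumes zc: "continuous_on {c..<T} z" and lim: "(z \<longlongrightarrow> l) (at_left T)" and cT: "c < T"
  shows "continuous_on {c..T} (\<lambda>t. if t < T then z t else l)"
proof (clarsimp simp: continuous_on_eq_continuous_within)
  fix t assume t: "c \<le> t" "t \<le> T"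
  show "continuous (at t within {c..T}) (\<lambda>t. if t < T then z t else l)"
  proof (cases "t < T")
    case True
    have "continuous (at t within {c..<T}) z"
      using zc t True by (simp add: continuous_on_eq_continuous_within)
    moreover have "at t within {c..<T} = at t within {c..T}"
      by (rule at_within_nhd[where S="{..<T}"]) (use True in auto)
    ultimately have "continuous (at t within {c..T}) z" by simp
    then show ?thesis
      by (rule continuous_transform_within[where \<delta>="T - t"]) (use True t in \<open>auto simp: dist_real_def\<close>)
  next
    case False
    then have tT: "t = T" using t by simp
    have "\<forall>\<^sub>F x in at_left T. (if x < T then z x else l) = z x"
      using eventually_at_left_real[OF cT] by (rule eventually_mono) auto
    then have "((\<lambda>t. if t < T then z t else l) \<longlongrightarrow> l) (at_left T)"
      using lim by (simp only: tendsto_cong)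
    moreover have "at T within {c..T} = at_left T" by (rule at_within_Icc_at_left) (use cT in auto)
    ultimately show ?thesis unfolding continuous_within tT by simp
  qed
qed

section \<open>An a priori bound from the Osgood condition\<close>

definition travel_density :: "real \<Rightarrow> real \<Rightarrow> (real \<Rightarrow> real) \<Rightarrow> real \<Rightarrow> real \<Rightarrow> real" where
  "travel_density K P0 G x0 u = 1 / sqrt (K * (K * P0\<^sup>2 + 2 * integral {x0..u} G))"

lemma travel_density_pos:
  assumes Gc: "continuous_on UNIV G" and Gp: "\<And>x. 0 < G x" and K: "0 < K" and P0: "0 < P0"
  shows "0 < travel_density K P0 G x0 u"
proof -
  have "0 \<le> integral {x0..u} G"
    by (rule integral_nonneg[OF integrable_continuous_interval[OF continuous_on_subset[OF Gc]]])
       (auto intro: less_imp_le Gp)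
  then show ?thesis using K P0 by (simp add: travel_density_def add_pos_nonneg)
qed

lemma continuous_on_travel_density:
  assumes Gc: "continuous_on UNIV G" and Gp: "\<And>x. 0 < G x" and K: "0 < K" and P0: "0 < P0"
  shows "continuous_on {x0..} (travel_density K P0 G x0)"
proof -
  have "continuous_on {x0..} (\<lambda>u. integral {x0..u} G)"
    by (rule continuous_on_indefinite_integral_Ici[OF continuous_on_subset[OF Gc]]) auto
  moreover have "sqrt (K * (K * P0\<^sup>2 + 2 * integral {x0..u} G)) \<noteq> 0" for u
    using travel_density_pos[OF assms, of x0 u] by (auto simp: travel_density_def)
  ultimately have "continuous_on {x0..} (\<lambda>u. 1 / sqrt (K * (K * P0\<^sup>2 + 2 * integral {x0..u} G)))"
    by (intro continuous_intros) auto
  then show ?thesis by (simp add: travel_density_def[abs_def])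
qed

text \<open>The energy \<open>K P\<^sup>2 - 2 \<integral>\<^bsub>Y a\<^esub>\<^sup>Y G\<close> of the system \<open>Y' = K P\<close>, \<open>P' \<le> G(Y)\<close> is nonincreasing,
  which bounds the speed \<open>Y' = K P\<close> by the reciprocal of the travel density at \<open>Y\<close>.\<close>

lemma energy_speed_bound:
  fixes G P Y p :: "real \<Rightarrow> real"
  assumes Gc: "continuous_on UNIV G" and Gp: "\<And>x. 0 < G x"
    and K: "0 < K" and P0: "0 < P0" and ab: "a \<le> b"
    and Pd: "\<And>s. s \<in> {a..b} \<Longrightarrow> (P has_real_derivative p s) (at s within {a..b})"
    and Yd: "\<And>s. s \<in> {a..b} \<Longrightarrow> (Y has_real_derivative K * P s) (at s within {a..b})"
    and pG: "\<And>s. s \<in> {a..b} \<Longrightarrow> p s \<le> G (Y s)"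
    and Pnn: "\<And>s. s \<in> {a..b} \<Longrightarrow> 0 \<le> P s" and Pa: "P a = P0"
    and s: "s \<in> {a..b}"
  shows "K * P s * travel_density K P0 G (Y a) (Y s) \<le> 1"
proof -
  define x0 where "x0 = Y a"
  have Pc: "continuous_on {a..b} P" by (rule has_real_derivative_imp_continuous_on[OF Pd])
  have Yc: "continuous_on {a..b} Y" by (rule has_real_derivative_imp_continuous_on[OF Yd])
  have KP: "0 \<le> K * P s" if "s \<in> {a..b}" for s using Pnn[OF that] K by simp
  have YinS: "Y s \<in> {x0..Y b}" if "s \<in> {a..b}" for s
    using DERIV_nonneg_imp_le_within[OF Yc Yd KP, of a s] DERIV_nonneg_imp_le_within[OF Yc Yd KP, of s b]
      that ab by (auto simp: x0_def)
  define I where "I = (\<lambda>u. integral {x0..u} G)"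
  have Id: "(I has_real_derivative G u) (at u within {x0..Y b})" if "u \<in> {x0..Y b}" for u
    unfolding I_def by (rule integral_has_real_derivative[OF continuous_on_subset[OF Gc] that]) auto
  have IYd: "((\<lambda>t. I (Y t)) has_real_derivative G (Y s) * (K * P s)) (at s within {a..b})"
    if s: "s \<in> {a..b}" for s
  proof -
    have "(I has_real_derivative G (Y s)) (at (Y s) within (Y ` {a..b}))"
      by (rule has_field_derivative_subset[OF Id]) (use YinS s in auto)
    from DERIV_image_chain[OF this Yd[OF s]] show ?thesis by (simp add: o_def)
  qed
  define E where "E = (\<lambda>t. K * (P t)\<^sup>2 - 2 * I (Y t))"
  have Ed: "((\<lambda>t. - E t) has_real_derivative
      - (K * (2 * P s * p s) - 2 * (G (Y s) * (K * P s)))) (at s within {a..b})"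
    if s: "s \<in> {a..b}" for s
  proof -
    have "((\<lambda>t. (P t)\<^sup>2) has_real_derivative 2 * (p s * P s)) (at s within {a..b})"
      using DERIV_power_Suc[OF Pd[OF s], of 1] by (simp add: numeral_2_eq_2)
    then show ?thesis unfolding E_def
      by (rule DERIV_cong[OF DERIV_minus[OF DERIV_diff[OF DERIV_cmult DERIV_cmult[OF IYd[OF s]]]]])
         (simp add: algebra_simps)
  qed
  have "- E a \<le> - E s"
  proof (rule DERIV_nonneg_imp_le_within[OF _ Ed])
    show "continuous_on {a..b} (\<lambda>t. - E t)" unfolding E_def
      by (intro continuous_intros Pc continuous_on_compose2[OF has_real_derivative_imp_continuous_on[OF Id] Yc])
         (use YinS in auto)
    fix x assume x: "x \<in> {a..b}"
    have "K * P x * p x \<le> K * P x * G (Y x)" using pG[OF x] KP[OF x] by (rule mult_left_mono)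
    then show "0 \<le> - (K * (2 * P x * p x) - 2 * (G (Y x) * (K * P x)))"
      by (simp add: algebra_simps)
  qed (use s ab in auto)
  then have "K * (P s)\<^sup>2 \<le> K * P0\<^sup>2 + 2 * I (Y s)" by (simp add: E_def Pa I_def x0_def)
  then have "K * (K * (P s)\<^sup>2) \<le> K * (K * P0\<^sup>2 + 2 * I (Y s))"
    using K by (rule mult_left_mono[OF _ less_imp_le])
  then have "(K * P s)\<^sup>2 \<le> K * (K * P0\<^sup>2 + 2 * I (Y s))"
    by (simp add: power2_eq_square algebra_simps)
  then have "K * P s \<le> sqrt (K * (K * P0\<^sup>2 + 2 * I (Y s)))"
    using KP[OF s] real_le_rsqrt by blast
  moreover have "0 < travel_density K P0 G x0 (Y s)" by (rule travel_density_pos[OF Gc Gp K P0])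
  ultimately show ?thesis
    by (simp add: travel_density_def I_def x0_def field_simps)
qed

lemma energy_travel_time_le:
  fixes G P Y p :: "real \<Rightarrow> real"
  assumes Gc: "continuous_on UNIV G" and Gp: "\<And>x. 0 < G x"
    and K: "0 < K" and P0: "0 < P0" and ab: "a \<le> b"
    and Pd: "\<And>s. s \<in> {a..b} \<Longrightarrow> (P has_real_derivative p s) (at s within {a..b})"
    and Yd: "\<And>s. s \<in> {a..b} \<Longrightarrow> (Y has_real_derivative K * P s) (at s within {a..b})"
    and pG: "\<And>s. s \<in> {a..b} \<Longrightarrow> p s \<le> G (Y s)"
    and Pnn: "\<And>s. s \<in> {a..b} \<Longrightarrow> 0 \<le> P s" and Pa: "P a = P0"
    and t: "t \<in> {a..b}"
  shows "integral {Y a..Y t} (travel_density K P0 G (Y a)) \<le> t - a"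
proof -
  define q where "q = travel_density K P0 G (Y a)"
  have Yc: "continuous_on {a..b} Y" by (rule has_real_derivative_imp_continuous_on[OF Yd])
  have KP: "0 \<le> K * P s" if "s \<in> {a..b}" for s using Pnn[OF that] K by simp
  have YinS: "Y s \<in> {Y a..Y b}" if "s \<in> {a..b}" for s
    using DERIV_nonneg_imp_le_within[OF Yc Yd KP, of a s] DERIV_nonneg_imp_le_within[OF Yc Yd KP, of s b]
      that ab by auto
  have qc: "continuous_on {Y a..Y b} q"
    unfolding q_def by (rule continuous_on_subset[OF continuous_on_travel_density[OF Gc Gp K P0]]) auto
  define \<Phi> where "\<Phi> = (\<lambda>y. integral {Y a..y} q)"
  have \<Phi>d: "(\<Phi> has_real_derivative q u) (at u within {Y a..Y b})" if "u \<in> {Y a..Y b}" for u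
    unfolding \<Phi>_def by (rule integral_has_real_derivative[OF qc that])
  have \<Phi>Yd: "((\<lambda>t. \<Phi> (Y t)) has_real_derivative q (Y s) * (K * P s)) (at s within {a..b})"
    if s: "s \<in> {a..b}" for s
  proof -
    have "(\<Phi> has_real_derivative q (Y s)) (at (Y s) within (Y ` {a..b}))"
      by (rule has_field_derivative_subset[OF \<Phi>d]) (use YinS s in auto)
    from DERIV_image_chain[OF this Yd[OF s]] show ?thesis by (simp add: o_def)
  qed
  have "(a - a) - \<Phi> (Y a) \<le> (t - a) - \<Phi> (Y t)"
  proof (rule DERIV_nonneg_imp_le_within[where f="\<lambda>t. (t - a) - \<Phi> (Y t)"
        and f'="\<lambda>s. (1 - 0) - q (Y s) * (K * P s)"])
    show "continuous_on {a..b} (\<lambda>t. (t - a) - \<Phi> (Y t))"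
      by (intro continuous_intros continuous_on_compose2[OF has_real_derivative_imp_continuous_on[OF \<Phi>d] Yc])
         (use YinS in auto)
    fix x assume x: "x \<in> {a..b}"
    show "((\<lambda>t. (t - a) - \<Phi> (Y t)) has_real_derivative (1 - 0) - q (Y x) * (K * P x)) (at x within {a..b})"
      by (intro DERIV_diff DERIV_ident DERIV_const \<Phi>Yd x)
    show "0 \<le> (1 - 0) - q (Y x) * (K * P x)"
      using energy_speed_bound[OF Gc Gp K P0 ab Pd Yd pG Pnn Pa x] by (simp add: q_def mult.commute)
  qed (use t ab in auto)
  then show ?thesis by (simp add: \<Phi>_def q_def)
qed

text \<open>\<open>z\<close> stays below the solution \<open>Y\<close> of \<open>Y' = K P\<close>, \<open>P' = G(z)\<close>, \<open>Y a = x0\<close>, \<open>P a = P0\<close>,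
  to which the energy bound applies because \<open>G\<close> is monotone.\<close>

lemma comparison_travel_time_le:
  fixes z d G :: "real \<Rightarrow> real"
  assumes Gc: "continuous_on UNIV G" and Gm: "mono G" and Gp: "\<And>x. 0 < G x"
    and K: "0 < K" and P0: "0 < P0" and ab: "a \<le> b"
    and zc: "continuous_on {a..b} z"
    and zd: "\<And>t. t \<in> {a..b} \<Longrightarrow> (z has_real_derivative d t) (at t within {a..b})"
    and dle: "\<And>t. t \<in> {a..b} \<Longrightarrow> d t \<le> K * (P0 + integral {a..t} (\<lambda>s. G (z s)))"
    and za: "z a \<le> x0"
    and t: "t \<in> {a..b}"
  shows "\<exists>y \<ge> max x0 (z t). integral {x0..y} (travel_density K P0 G x0) \<le> t - a"
proof -
  let ?Gz = "\<lambda>s. G (z s)"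
  have Gzc: "continuous_on {a..b} ?Gz"
    using continuous_on_compose2[OF Gc zc] by auto
  define P where "P = (\<lambda>t. P0 + integral {a..t} ?Gz)"
  have Pd: "(P has_real_derivative G (z s)) (at s within {a..b})" if s: "s \<in> {a..b}" for s
  proof -
    have "((\<lambda>x. P0 + integral {a..x} ?Gz) has_real_derivative (0 + G (z s))) (at s within {a..b})"
      by (intro DERIV_add DERIV_const integral_has_real_derivative Gzc s)
    then show ?thesis by (simp add: P_def)
  qed
  have Pc: "continuous_on {a..b} P" by (rule has_real_derivative_imp_continuous_on[OF Pd])
  have Pge: "P s \<ge> P0" if s: "s \<in> {a..b}" for s
  proof -
    have "continuous_on {a..s} ?Gz" using Gzc by (rule continuous_on_subset) (use s in auto)
    then have "integral {a..s} ?Gz \<ge> 0"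
      by (intro integral_nonneg integrable_continuous_interval) (auto intro: less_imp_le Gp)
    then show ?thesis by (simp add: P_def)
  qed
  define Y where "Y = (\<lambda>t. x0 + K * integral {a..t} P)"
  have Yd: "(Y has_real_derivative K * P s) (at s within {a..b})" if s: "s \<in> {a..b}" for s
  proof -
    have "((\<lambda>x. x0 + K * integral {a..x} P) has_real_derivative (0 + K * P s)) (at s within {a..b})"
      by (intro DERIV_add DERIV_const DERIV_cmult integral_has_real_derivative Pc s)
    then show ?thesis by (simp add: Y_def)
  qed
  have Yc: "continuous_on {a..b} Y" by (rule has_real_derivative_imp_continuous_on[OF Yd])
  have Ya: "Y a = x0" by (simp add: Y_def)
  have KP: "0 \<le> K * P s" if "s \<in> {a..b}" for s using Pge[OF that] K P0 by simp
  have zY: "z s \<le> Y s" if s: "s \<in> {a..b}" for s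
  proof -
    have "Y a - z a \<le> Y s - z s"
    proof (rule DERIV_nonneg_imp_le_within[where f="\<lambda>t. Y t - z t" and f'="\<lambda>t. K * P t - d t"])
      show "continuous_on {a..b} (\<lambda>t. Y t - z t)" by (intro continuous_intros Yc zc)
      fix x assume x: "x \<in> {a..b}"
      show "((\<lambda>t. Y t - z t) has_real_derivative K * P x - d x) (at x within {a..b})"
        by (intro DERIV_diff Yd zd x)
      show "0 \<le> K * P x - d x" using dle[OF x] by (simp add: P_def)
    qed (use s ab in auto)
    then show ?thesis using za Ya by simp
  qed
  then have GzY: "G (z s) \<le> G (Y s)" if "s \<in> {a..b}" for s
    using Gm that by (auto intro: monoD)
  have "x0 \<le> Y t"
    using DERIV_nonneg_imp_le_within[OF Yc Yd KP, of a t] t ab Ya by auto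
  moreover have "integral {x0..Y t} (travel_density K P0 G x0) \<le> t - a"
    using energy_travel_time_le[OF Gc Gp K P0 ab Pd Yd GzY, of t] Pge P0 t
    by (force simp: P_def Ya)
  ultimately show ?thesis using zY[OF t]
    by (intro exI[of _ "Y t"]) auto
qed

definition osgood_condition :: "(real \<Rightarrow> real) \<Rightarrow> bool" where
  "osgood_condition f \<longleftrightarrow> (\<forall>\<eta>>0. (\<integral>\<^sup>+ u\<in>{\<eta><..}.
     ennreal (1 / sqrt (enn2real (\<integral>\<^sup>+ s\<in>{0<..u}. ennreal (f s) \<partial>lborel))) \<partial>lborel) = \<infinity>)"

lemma asymp_increasing_monotone_majorant:
  fixes f \<phi> :: "real \<Rightarrow> real"
  assumes f_cont: "continuous_on {0<..} f" and f_pos: "\<forall>x>0. f x > 0"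
    and \<phi>c: "continuous_on {0<..} \<phi>" and \<phi>m: "strict_mono_on {0<..} \<phi>"
    and \<phi>p: "\<forall>x>0. \<phi> x > 0" and lim: "((\<lambda>x. f x / \<phi> x) \<longlongrightarrow> 1) at_top"
    and m: "m > 0"
  obtains G X \<mu> B' where "continuous_on UNIV G" "mono G" "\<And>x. 0 < G x" "\<And>x. x \<ge> m \<Longrightarrow> f x \<le> G x"
    "X > 0" "\<mu> > 0" "\<And>x. x \<ge> X \<Longrightarrow> G x \<le> 4 * f x + B'" "\<And>x. x \<ge> X \<Longrightarrow> f x \<ge> \<mu>"
proof -
  have "\<forall>\<^sub>F x in at_top. f x / \<phi> x > 1/2" by (rule order_tendstoD(1)[OF lim]) simp
  moreover have "\<forall>\<^sub>F x in at_top. f x / \<phi> x < 3/2" by (rule order_tendstoD(2)[OF lim]) simp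
  ultimately have "\<forall>\<^sub>F x in at_top. f x / \<phi> x > 1/2 \<and> f x / \<phi> x < 3/2" by (rule eventually_conj)
  then obtain X1 where X1: "\<And>x. x \<ge> X1 \<Longrightarrow> f x / \<phi> x > 1/2 \<and> f x / \<phi> x < 3/2"
    unfolding eventually_at_top_linorder by blast
  define X where "X = max X1 (max m 1)"
  have X: "X > 0" "X \<ge> m" by (auto simp: X_def)
  have fphi: "\<phi> x < 2 * f x" "f x \<le> 2 * \<phi> x" if "x \<ge> X" for x
  proof -
    have px: "\<phi> x > 0" using \<phi>p X that by simp
    have "f x / \<phi> x > 1/2" "f x / \<phi> x < 3/2" using X1[of x] that by (auto simp: X_def)
    then show "\<phi> x < 2 * f x" "f x \<le> 2 * \<phi> x" using px by (auto simp: field_simps)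
  qed
  have \<phi>mono: "\<phi> x \<le> \<phi> y" if "0 < x" "x \<le> y" for x y
    using mono_onD[OF strict_mono_on_imp_mono_on[OF \<phi>m]] that by auto
  have "\<exists>x\<in>{m..X}. \<forall>y\<in>{m..X}. f y \<le> f x"
    by (rule continuous_attains_sup) (use X m in \<open>auto intro: continuous_on_subset[OF f_cont]\<close>)
  then obtain x1 where x1: "x1 \<in> {m..X}" "\<And>y. y \<in> {m..X} \<Longrightarrow> f y \<le> f x1" by blast
  define B where "B = f x1"
  have B: "B > 0" using x1 f_pos m by (auto simp: B_def)
  define G where "G = (\<lambda>x. 2 * \<phi> (max x m) + B)"
  show ?thesis
  proof
    show "continuous_on UNIV G" unfolding G_def
      by (intro continuous_intros continuous_on_compose2[OF \<phi>c]) (use m in auto)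
    show "mono G" unfolding G_def
    proof (rule monoI)
      fix x y :: real assume "x \<le> y"
      then have "\<phi> (max x m) \<le> \<phi> (max y m)" using \<phi>mono[of "max x m" "max y m"] m by auto
      then show "2 * \<phi> (max x m) + B \<le> 2 * \<phi> (max y m) + B" by simp
    qed
    have pm: "\<phi> (max x m) > 0" for x using \<phi>p m by (simp add: less_max_iff_disj)
    show "0 < G x" for x using pm[of x] B by (simp add: G_def)
    show "f x \<le> G x" if "x \<ge> m" for x
    proof (cases "x \<le> X")
      case True
      then have "f x \<le> B" using x1(2)[of x] that by (auto simp: B_def)
      then show ?thesis using pm[of x] by (simp add: G_def)
    next
      case False
      then show ?thesis using fphi[of x] that B by (simp add: G_def max_absorb1)
    qed
    show "X > 0" by (rule X)
    show "\<phi> X / 2 > 0" using \<phi>p X by auto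
    show "G x \<le> 4 * f x + B" if "x \<ge> X" for x
      using fphi[of x] that X by (simp add: G_def max_absorb1)
    show "f x \<ge> \<phi> X / 2" if "x \<ge> X" for x
      using fphi[of x] \<phi>mono[of X x] that X by simp
  qed
qed

lemma integral_le_nn_integral_Ioc:
  fixes f :: "real \<Rightarrow> real"
  assumes fc: "continuous_on {X..u} f" and fnn: "\<And>x. x \<in> {0<..u} \<Longrightarrow> 0 \<le> f x" and X: "0 < X"
  shows "ennreal (integral {X..u} f) \<le> (\<integral>\<^sup>+ s\<in>{0<..u}. ennreal (f s) \<partial>lborel)"
proof -
  have "(f has_integral integral {X..u} f) {X..u}"
    using integrable_continuous_interval[OF fc] by (rule integrable_integral)
  from nn_integral_has_integral_lebesgue'[OF _ this]
  have "(\<integral>\<^sup>+ s. ennreal (f s) * indicator {X..u} s \<partial>lborel) = ennreal (integral {X..u} f)"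
    using fnn X by auto
  moreover have "(\<integral>\<^sup>+ s. ennreal (f s) * indicator {X..u} s \<partial>lborel)
      \<le> (\<integral>\<^sup>+ s\<in>{0<..u}. ennreal (f s) \<partial>lborel)"
    by (rule nn_integral_mono) (use X in \<open>auto simp: indicator_def\<close>)
  ultimately show ?thesis by simp
qed

lemma nn_integral_Ici_finite:
  fixes g :: "real \<Rightarrow> real"
  assumes gc: "continuous_on {U..} g" and gnn: "\<And>x. U \<le> x \<Longrightarrow> 0 \<le> g x"
    and bnd: "\<And>R. U \<le> R \<Longrightarrow> integral {U..R} g \<le> B"
  shows "(\<integral>\<^sup>+x. ennreal (g x) * indicator {U..} x \<partial>lborel) < \<infinity>"
proof -
  define g' where "g' = (\<lambda>x. g (max x U))"
  have g'c: "continuous_on UNIV g'"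
    unfolding g'_def by (intro continuous_on_compose2[OF gc] continuous_intros) auto
  have g'nn: "0 \<le> g' x" for x using gnn by (simp add: g'_def)
  have g'int: "g' integrable_on {x..y}" for x y
    by (rule integrable_continuous_interval, rule continuous_on_subset[OF g'c]) auto
  \<comment> \<open>The primitive starts below \<open>U\<close> so that it is differentiable at \<open>U\<close> itself.\<close>
  define F where "F = (\<lambda>R. integral {U-1..R} g')"
  have Fsplit: "F R' = F R + integral {R..R'} g'" if "U - 1 \<le> R" "R \<le> R'" for R R'
    unfolding F_def using Henstock_Kurzweil_Integration.integral_combine[OF that g'int] by simp
  have Fmono: "F R \<le> F R'" if "U \<le> R" "R \<le> R'" for R R'
    using Fsplit[of R R'] integral_nonneg[OF g'int g'nn, of R R'] that by simp
  have Fbdd: "F R \<le> F U + B" if "U \<le> R" for R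
  proof -
    have "integral {U..R} g' = integral {U..R} g"
      by (rule integral_cong) (simp add: g'_def)
    then show ?thesis using Fsplit[of U R] bnd[OF that] that by simp
  qed
  define T where "T = (SUP R\<in>{U..}. F R)"
  have bdd: "bdd_above (F ` {U..})" using Fbdd by (intro bdd_aboveI[of _ "F U + B"]) auto
  have FT: "(F \<longlongrightarrow> T) at_top"
  proof (rule increasing_tendsto)
    show "\<forall>\<^sub>F n in at_top. F n \<le> T"
      unfolding T_def eventually_at_top_linorder using bdd by (auto intro!: exI[of _ U] cSUP_upper)
    fix x assume "x < T"
    then obtain R0 where R0: "R0 \<in> {U..}" "x < F R0"
      unfolding T_def using less_cSUP_iff[OF _ bdd] by auto
    then show "\<forall>\<^sub>F n in at_top. x < F n"
      unfolding eventually_at_top_linorder using Fmono by (auto intro!: exI[of _ R0] intro: less_le_trans)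
  qed
  have "(\<integral>\<^sup>+x. ennreal (g' x) * indicator {U..} x \<partial>lborel) = T - F U"
  proof (rule nn_integral_FTC_atLeast[OF borel_measurable_continuous_onI[OF g'c] _ g'nn FT])
    fix x assume x: "U \<le> x"
    have "(F has_real_derivative g' x) (at x within {U-1..x+1})"
      unfolding F_def by (rule integral_has_real_derivative[OF continuous_on_subset[OF g'c]]) (use x in auto)
    then show "(F has_real_derivative g' x) (at x)"
      using at_within_Icc_at[of "U-1" x "x+1"] x by auto
  qed
  moreover have "(\<integral>\<^sup>+x. ennreal (g' x) * indicator {U..} x \<partial>lborel)
      = (\<integral>\<^sup>+x. ennreal (g x) * indicator {U..} x \<partial>lborel)"
    by (rule nn_integral_cong) (simp add: g'_def indicator_def max_absorb1)
  ultimately show ?thesis by simp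
qed

lemma majorant_energy_le_integral:
  fixes f G :: "real \<Rightarrow> real"
  assumes f_cont: "continuous_on {0<..} f" and f_pos: "\<forall>x>0. f x > 0"
    and Gc: "continuous_on UNIV G" and Gp: "\<And>x. 0 < G x"
    and X: "X > 0" and \<mu>: "\<mu> > 0"
    and GB: "\<And>x. x \<ge> X \<Longrightarrow> G x \<le> 4 * f x + B'"
    and f\<mu>: "\<And>x. x \<ge> X \<Longrightarrow> f x \<ge> \<mu>"
    and K: "K > 0" and P0: "P0 > 0"
  obtains \<beta> U where "0 < \<beta>" "x0 \<le> U" "X \<le> U"
    "\<And>u. U \<le> u \<Longrightarrow> K * (K * P0\<^sup>2 + 2 * integral {x0..u} G) \<le> \<beta> * integral {X..u} f"
    "\<And>u. U \<le> u \<Longrightarrow> 0 < integral {X..u} f"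
proof -
  define I where "I = (\<lambda>u. integral {x0..u} G)"
  have Gint: "G integrable_on {a..b}" for a b
    by (rule integrable_continuous_interval, rule continuous_on_subset[OF Gc]) auto
  have fint: "f integrable_on {a..b}" if "a > 0" for a b
    by (rule integrable_continuous_interval, rule continuous_on_subset[OF f_cont]) (use that in auto)
  have Ige: "I u \<ge> 0" for u
    unfolding I_def by (rule integral_nonneg[OF Gint]) (auto intro: less_imp_le Gp)
  define X' where "X' = max x0 X"
  define J where "J = (\<lambda>u. integral {X..u} f)"
  define B'' where "B'' = max B' 0"
  have Jlow: "\<mu> * (u - X) \<le> J u" if "X \<le> u" for u
  proof -
    have "integral {X..u} (\<lambda>x. \<mu>) \<le> J u"
      unfolding J_def by (rule integral_le[OF _ fint[OF X]]) (use f\<mu> in auto)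
    then show ?thesis using that by (simp add: mult.commute)
  qed
  have JI: "I u \<le> I X' + (4 + B''/\<mu>) * J u" if u: "u \<ge> X'" for u
  proof -
    have "I u = I X' + integral {X'..u} G"
      unfolding I_def using Henstock_Kurzweil_Integration.integral_combine[OF _ u Gint, of x0]
      by (simp add: X'_def)
    moreover have "integral {X'..u} G \<le> integral {X'..u} (\<lambda>x. 4 * f x + B'')"
      by (rule integral_le[OF Gint])
        (use fint X in \<open>auto simp: X'_def B''_def intro!: integrable_add integrable_cmul\<close>,
         meson GB add_left_mono max.cobounded1 order_trans)
    moreover have "integral {X'..u} (\<lambda>x. 4 * f x + B'') = 4 * integral {X'..u} f + B'' * (u - X')"
      using fint[of X' u] X u by (simp add: X'_def integral_add integrable_const_ivl)
    moreover have "integral {X'..u} f \<le> J u"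
    proof -
      have "J u = integral {X..X'} f + integral {X'..u} f"
        unfolding J_def using Henstock_Kurzweil_Integration.integral_combine[OF _ u fint[OF X]]
        by (simp add: X'_def)
      moreover have "integral {X..X'} f \<ge> 0"
        by (rule integral_nonneg[OF fint[OF X]]) (use X f_pos in \<open>auto intro: less_imp_le\<close>)
      ultimately show ?thesis by simp
    qed
    moreover have "B'' * (u - X') \<le> B''/\<mu> * J u"
    proof -
      have "B'' * (u - X') \<le> B'' * (u - X)"
        by (intro mult_left_mono) (auto simp: X'_def B''_def)
      also have "\<dots> = B''/\<mu> * (\<mu> * (u - X))" using \<mu> by simp
      also have "\<dots> \<le> B''/\<mu> * J u"
        by (intro mult_left_mono Jlow) (use u \<mu> in \<open>auto simp: B''_def X'_def\<close>)
      finally show ?thesis .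
    qed
    ultimately have "I u \<le> I X' + 4 * J u + B''/\<mu> * J u" by linarith
    then show ?thesis by (simp add: ring_distribs)
  qed
  define c1 where "c1 = K * (K * P0\<^sup>2 + 2 * I X')"
  have c1: "c1 > 0" using K P0 Ige[of X'] by (simp add: c1_def add_pos_nonneg)
  define \<beta> where "\<beta> = 1 + 2 * K * (4 + B''/\<mu>)"
  have \<beta>: "\<beta> > 0" using K \<mu> by (simp add: \<beta>_def B''_def add_pos_nonneg)
  define U where "U = max (X' + 1) (X + c1/\<mu>)"
  have UX: "U \<ge> X' + 1" "U \<ge> X + c1/\<mu>" by (auto simp: U_def)
  have Jc: "c1 \<le> J u" if u: "U \<le> u" for u
  proof -
    have "\<mu> * (c1/\<mu>) \<le> \<mu> * (u - X)" using u UX \<mu> by (intro mult_left_mono) auto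
    moreover have "X \<le> u" using u UX(1) by (auto simp: X'_def)
    ultimately show ?thesis using Jlow[of u] \<mu> by simp
  qed
  show ?thesis
  proof (rule that[of \<beta> U])
    fix u assume u: "U \<le> u"
    have "K * (K * P0\<^sup>2 + 2 * I u) \<le> K * (K * P0\<^sup>2 + 2 * (I X' + (4 + B''/\<mu>) * J u))"
      using JI[of u] u UX K by (intro mult_left_mono) auto
    also have "\<dots> = c1 + 2 * K * (4 + B''/\<mu>) * J u" by (simp add: c1_def algebra_simps)
    also have "\<dots> \<le> \<beta> * J u" using Jc[OF u] by (simp add: \<beta>_def algebra_simps)
    finally show "K * (K * P0\<^sup>2 + 2 * integral {x0..u} G) \<le> \<beta> * integral {X..u} f"
      by (simp add: I_def J_def)
    show "0 < integral {X..u} f" using Jc[OF u] c1 by (simp add: J_def)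
  qed (use \<beta> UX in \<open>auto simp: X'_def\<close>)
qed

lemma osgood_majorant_diverges:
  fixes f G :: "real \<Rightarrow> real"
  assumes f_cont: "continuous_on {0<..} f" and f_pos: "\<forall>x>0. f x > 0"
    and Gc: "continuous_on UNIV G" and Gp: "\<And>x. 0 < G x"
    and X: "X > 0" and \<mu>: "\<mu> > 0"
    and GB: "\<And>x. x \<ge> X \<Longrightarrow> G x \<le> 4 * f x + B'"
    and f\<mu>: "\<And>x. x \<ge> X \<Longrightarrow> f x \<ge> \<mu>"
    and osgood: "osgood_condition f"
    and K: "K > 0" and P0: "P0 > 0"
  shows "\<exists>R\<ge>x0. L < integral {x0..R} (travel_density K P0 G x0)"
proof (rule ccontr)
  define q where "q = travel_density K P0 G x0"
  assume "\<not> ?thesis"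
  then have bndL: "integral {x0..R} q \<le> L" if "R \<ge> x0" for R
    using that by (force simp: q_def)
  obtain \<beta> U where \<beta>: "0 < \<beta>" and U: "x0 \<le> U" "X \<le> U"
    and energy: "\<And>u. U \<le> u \<Longrightarrow> K * (K * P0\<^sup>2 + 2 * integral {x0..u} G) \<le> \<beta> * integral {X..u} f"
    and Jpos: "\<And>u. U \<le> u \<Longrightarrow> 0 < integral {X..u} f"
    using majorant_energy_le_integral[OF f_cont f_pos Gc Gp X \<mu> GB f\<mu> K P0] by blast
  have qc: "continuous_on {x0..} q"
    unfolding q_def by (rule continuous_on_travel_density[OF Gc Gp K P0])
  have qpos: "0 < q u" for u unfolding q_def by (rule travel_density_pos[OF Gc Gp K P0])
  have qnn: "0 \<le> q u" for u using qpos[of u] by simp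
  define Fn where "Fn = (\<lambda>u. \<integral>\<^sup>+ s\<in>{0<..u}. ennreal (f s) \<partial>lborel)"
  define h where "h = (\<lambda>u. ennreal (1 / sqrt (enn2real (Fn u))))"
  have hle: "h u \<le> ennreal (sqrt \<beta> * q u)" if u: "U \<le> u" for u
  proof (cases "Fn u = \<infinity>")
    case True then show ?thesis by (simp add: h_def)
  next
    case False
    have "ennreal (integral {X..u} f) \<le> Fn u"
      unfolding Fn_def
      by (rule integral_le_nn_integral_Ioc[OF continuous_on_subset[OF f_cont] _ X])
         (use X f_pos in \<open>auto intro: less_imp_le\<close>)
    then have FJ: "integral {X..u} f \<le> enn2real (Fn u)"
      using False Jpos[OF u] enn2real_mono[of "ennreal (integral {X..u} f)" "Fn u"]
      by (simp add: top.not_eq_extremum)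
    have "K * (K * P0\<^sup>2 + 2 * integral {x0..u} G) \<le> \<beta> * enn2real (Fn u)"
      using energy[OF u] mult_left_mono[OF FJ, of \<beta>] \<beta> by linarith
    then have "sqrt (K * (K * P0\<^sup>2 + 2 * integral {x0..u} G)) \<le> sqrt \<beta> * sqrt (enn2real (Fn u))"
      by (subst real_sqrt_mult[symmetric]) (rule real_sqrt_le_mono)
    moreover have "0 < K * (K * P0\<^sup>2 + 2 * integral {x0..u} G)"
      using qpos[of u] by (simp add: q_def travel_density_def)
    ultimately have "1 / sqrt (enn2real (Fn u)) \<le> sqrt \<beta> * q u"
      using Jpos[OF u] FJ \<beta> by (simp add: q_def travel_density_def field_simps)
    then show ?thesis by (simp add: h_def ennreal_leI)
  qed
  have "integral {U..R} (\<lambda>u. sqrt \<beta> * q u) \<le> sqrt \<beta> * L" if R: "U \<le> R" for R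
  proof -
    have qint: "q integrable_on {x0..R}"
      by (rule integrable_continuous_interval, rule continuous_on_subset[OF qc]) auto
    have "integral {x0..R} q = integral {x0..U} q + integral {U..R} q"
      using Henstock_Kurzweil_Integration.integral_combine[OF U(1) R qint] by simp
    moreover have "0 \<le> integral {x0..U} q"
      by (rule integral_nonneg[OF integrable_subinterval_real[OF qint]]) (use R qnn in auto)
    ultimately have "integral {U..R} q \<le> L" using bndL[of R] U R by simp
    then show ?thesis using \<beta> by (simp add: mult_left_mono)
  qed
  moreover have "continuous_on {U..} (\<lambda>x. sqrt \<beta> * q x)"
    by (intro continuous_intros continuous_on_subset[OF qc]) (use U in auto)
  ultimately have "(\<integral>\<^sup>+x. ennreal (sqrt \<beta> * q x) * indicator {U..} x \<partial>lborel) < \<infinity>"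
    by (intro nn_integral_Ici_finite[where B="sqrt \<beta> * L"]) (use qnn \<beta> in auto)
  moreover have "(\<integral>\<^sup>+ u\<in>{U<..}. h u \<partial>lborel) \<le> (\<integral>\<^sup>+x. ennreal (sqrt \<beta> * q x) * indicator {U..} x \<partial>lborel)"
    by (rule nn_integral_mono) (auto simp: indicator_def intro: hle)
  moreover have "U > 0" using U X by simp
  ultimately show False using osgood unfolding osgood_condition_def h_def Fn_def by fastforce
qed

lemma uniform_apriori_bound:
  fixes f :: "real \<Rightarrow> real"
  assumes f_cont: "continuous_on {0<..} f" and f_pos: "\<forall>x>0. f x > 0"
    and f_asymp: "asymp_increasing f"
    and osgood: "osgood_condition f"
    and m: "m > 0" and K: "K > 0" and P0: "P0 > 0"
  obtains R where "\<And>a b z d t. a \<le> b \<Longrightarrow> b - a \<le> L \<Longrightarrow> continuous_on {a..b} z \<Longrightarrow>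
      (\<And>t. t \<in> {a..b} \<Longrightarrow> (z has_real_derivative d t) (at t within {a..b})) \<Longrightarrow>
      (\<And>t. t \<in> {a..b} \<Longrightarrow> d t \<le> K * (P0 + integral {a..t} (\<lambda>s. f (z s)))) \<Longrightarrow>
      z a \<le> x0 \<Longrightarrow> (\<And>t. t \<in> {a..b} \<Longrightarrow> z t \<ge> m) \<Longrightarrow> t \<in> {a..b} \<Longrightarrow> z t \<le> R"
proof -
  obtain \<phi> where \<phi>c: "continuous_on {0<..} \<phi>" and \<phi>m: "strict_mono_on {0<..} \<phi>"
    and \<phi>p: "\<forall>x>0. \<phi> x > 0" and lim: "((\<lambda>x. f x / \<phi> x) \<longlongrightarrow> 1) at_top"
    using f_asymp unfolding asymp_increasing_def by blast
  obtain G X \<mu> B' where Gc: "continuous_on UNIV G" and Gm: "mono G" and Gp: "\<And>x. 0 < G x"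
    and fG: "\<And>x. x \<ge> m \<Longrightarrow> f x \<le> G x" and X: "X > 0" and \<mu>: "\<mu> > 0"
    and GB: "\<And>x. x \<ge> X \<Longrightarrow> G x \<le> 4 * f x + B'" and f\<mu>: "\<And>x. x \<ge> X \<Longrightarrow> f x \<ge> \<mu>"
    using asymp_increasing_monotone_majorant[OF f_cont f_pos \<phi>c \<phi>m \<phi>p lim m] by blast
  define q where "q = travel_density K P0 G x0"
  obtain R0 where R0: "R0 \<ge> x0" "integral {x0..R0} q > L"
    using osgood_majorant_diverges[OF f_cont f_pos Gc Gp X \<mu> GB f\<mu> osgood K P0, of x0 L]
    unfolding q_def by blast
  have qint: "q integrable_on {x0..y}" for y
    unfolding q_def
    by (rule integrable_continuous_interval, rule continuous_on_subset[OF continuous_on_travel_density[OF Gc Gp K P0]]) auto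
  have qnn: "0 \<le> q u" for u
    unfolding q_def using travel_density_pos[OF Gc Gp K P0] less_imp_le by blast
  show ?thesis
  proof (rule that)
    fix a b z d t
    assume ab: "a \<le> b" and L: "b - a \<le> L" and zc: "continuous_on {a..b} z"
      and zd: "\<And>t. t \<in> {a..b} \<Longrightarrow> (z has_real_derivative d t) (at t within {a..b})"
      and dle: "\<And>t. t \<in> {a..b} \<Longrightarrow> d t \<le> K * (P0 + integral {a..t} (\<lambda>s. f (z s)))"
      and za: "z a \<le> x0" and zm: "\<And>t. t \<in> {a..b} \<Longrightarrow> z t \<ge> m" and t: "t \<in> {a..b}"
    have dle': "d s \<le> K * (P0 + integral {a..s} (\<lambda>s. G (z s)))" if s: "s \<in> {a..b}" for s
    proof -
      have zc': "continuous_on {a..s} z" using zc by (rule continuous_on_subset) (use s in auto)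
      have "continuous_on {a..s} (\<lambda>s. f (z s))"
        by (rule continuous_on_compose2[OF f_cont zc']) (use zm s m in \<open>force\<close>)
      moreover have "continuous_on {a..s} (\<lambda>s. G (z s))"
        by (rule continuous_on_compose2[OF Gc zc']) auto
      ultimately have "integral {a..s} (\<lambda>s. f (z s)) \<le> integral {a..s} (\<lambda>s. G (z s))"
        by (intro integral_le integrable_continuous_interval fG) (use zm s in auto)
      then have "K * (P0 + integral {a..s} (\<lambda>s. f (z s))) \<le> K * (P0 + integral {a..s} (\<lambda>s. G (z s)))"
        using K by (intro mult_left_mono) auto
      then show ?thesis using dle[OF s] by linarith
    qed
    obtain y where y: "y \<ge> max x0 (z t)" "integral {x0..y} q \<le> t - a"
      using comparison_travel_time_le[OF Gc Gm Gp K P0 ab zc zd dle' za t] unfolding q_def by blast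
    show "z t \<le> R0"
    proof (rule ccontr)
      assume "\<not> z t \<le> R0"
      then have yR: "y \<ge> R0" using y by simp
      have "integral {x0..y} q = integral {x0..R0} q + integral {R0..y} q"
        using Henstock_Kurzweil_Integration.integral_combine[OF R0(1) yR qint] by simp
      moreover have "integral {R0..y} q \<ge> 0"
        by (rule integral_nonneg) (use qint[of y] R0 in \<open>auto intro: integrable_subinterval_real qnn\<close>)
      ultimately show False using R0 y L t by auto
    qed
  qed
qed

section \<open>The memory term\<close>

text \<open>\<open>lagged_conv k f \<delta> h u s\<close> is the memory term \<open>\<integral>\<^sub>0\<^sup>\<delta> k(\<rho>) f(u(s - \<rho> - h)) d\<rho>\<close> with an additional
  lag \<open>h\<close>; for \<open>h > 0\<close> it only involves \<open>u\<close> on \<open>(-\<infinity>, s - h]\<close>, which drives the method of steps.\<close>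

definition lagged_conv ::
  "(real \<Rightarrow> real) \<Rightarrow> (real \<Rightarrow> real) \<Rightarrow> real \<Rightarrow> real \<Rightarrow> (real \<Rightarrow> real) \<Rightarrow> real \<Rightarrow> real" where
  "lagged_conv k f \<delta> h u s = integral {0..\<delta>} (\<lambda>\<rho>. k \<rho> * f (u (s - \<rho> - h)))"

definition delay_conv :: "(real \<Rightarrow> real) \<Rightarrow> (real \<Rightarrow> real) \<Rightarrow> real \<Rightarrow> (real \<Rightarrow> real) \<Rightarrow> real \<Rightarrow> real" where
  "delay_conv k f \<delta> z t = integral {t-\<delta>..t} (\<lambda>s. k (t - s) * f (z s))"

definition delay_sol ::
  "(real \<Rightarrow> real) \<Rightarrow> (real \<Rightarrow> real) \<Rightarrow> real \<Rightarrow> real \<Rightarrow> (real \<Rightarrow> real) \<Rightarrow> real set \<Rightarrow> (real \<Rightarrow> real) \<Rightarrow> bool" where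
  "delay_sol k f \<delta> a \<phi> I z \<longleftrightarrow>
     continuous_on ({a-\<delta>..a} \<union> I) z \<and> (\<forall>t\<in>{a-\<delta>..a} \<union> I. 0 < z t) \<and> (\<forall>t\<in>{a-\<delta>..a}. z t = \<phi> t) \<and>
     (\<forall>t\<in>I. (z has_real_derivative delay_conv k f \<delta> z t) (at t within I))"

lemma integral_reflect_shift:
  fixes H :: "real \<Rightarrow> real"
  shows "integral {t-\<delta>..t} (\<lambda>s. H (t - s)) = integral {0..\<delta>} H"
proof -
  have "integral {(t-\<delta>)-t..t-t} (\<lambda>x. H (t - (x + t))) = integral {t-\<delta>..t} (\<lambda>s. H (t - s))"
    by (rule integral_shift_real_ivl)
  moreover have "integral {-\<delta>..-0} (\<lambda>x. H (-x)) = integral {0..\<delta>} H"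
    by (rule Henstock_Kurzweil_Integration.integral_reflect_real)
  ultimately show ?thesis by simp
qed

lemma lagged_conv_zero: "lagged_conv k f \<delta> 0 z t = delay_conv k f \<delta> z t"
  using integral_reflect_shift[where H="\<lambda>\<rho>. k \<rho> * f (z (t - \<rho>))" and t=t and \<delta>=\<delta>]
  by (simp add: lagged_conv_def delay_conv_def)

lemma lagged_conv_cong:
  assumes "\<And>\<rho>. \<rho> \<in> {0..\<delta>} \<Longrightarrow> u (s - \<rho> - h) = v (s - \<rho> - h)"
  shows "lagged_conv k f \<delta> h u s = lagged_conv k f \<delta> h v s"
  unfolding lagged_conv_def by (rule integral_cong) (simp add: assms)

lemma delay_conv_cong:
  assumes "\<And>s. s \<in> {t-\<delta>..t} \<Longrightarrow> z s = w s"
  shows "delay_conv k f \<delta> z t = delay_conv k f \<delta> w t"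
  unfolding delay_conv_def by (rule integral_cong) (simp add: assms)

lemma continuous_on_lagged_conv:
  fixes k f u :: "real \<Rightarrow> real"
  assumes kc: "continuous_on {0..\<delta>} k" and Fc: "continuous_on T (\<lambda>r. f (u r))"
    and sub: "\<And>s \<rho>. s \<in> S \<Longrightarrow> \<rho> \<in> {0..\<delta>} \<Longrightarrow> s - \<rho> - h \<in> T"
  shows "continuous_on S (lagged_conv k f \<delta> h u)"
proof -
  have c1: "continuous_on (S \<times> {0..\<delta>}) (\<lambda>x. k (snd x))"
    by (rule continuous_on_compose2[OF kc continuous_on_snd]) auto
  have c2: "continuous_on (S \<times> {0..\<delta>}) (\<lambda>x. f (u (fst x - snd x - h)))"
    by (rule continuous_on_compose2[OF Fc], intro continuous_intros) (auto simp: sub)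
  have "continuous_on (S \<times> cbox 0 \<delta>) (\<lambda>(s, \<rho>). k \<rho> * f (u (s - \<rho> - h)))"
    using continuous_on_mult[OF c1 c2] by (simp add: split_beta)
  from integral_continuous_on_param[OF this] show ?thesis by (simp add: lagged_conv_def)
qed

lemma lagged_conv_nonneg:
  fixes k f u :: "real \<Rightarrow> real"
  assumes kc: "continuous_on {0..\<delta>} k" and knn: "\<forall>\<rho>\<in>{0..\<delta>}. k \<rho> \<ge> 0"
    and f_cont: "continuous_on {0<..} f" and f_pos: "\<forall>x>0. f x > 0"
    and uc: "continuous_on T u" and upos: "\<And>r. r \<in> T \<Longrightarrow> u r > 0"
    and sub: "\<And>\<rho>. \<rho> \<in> {0..\<delta>} \<Longrightarrow> s - \<rho> - h \<in> T"
  shows "lagged_conv k f \<delta> h u s \<ge> 0"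
proof -
  have Fc: "continuous_on T (\<lambda>r. f (u r))"
    by (rule continuous_on_compose2[OF f_cont uc]) (use upos in auto)
  have "continuous_on {0..\<delta>} (\<lambda>\<rho>. k \<rho> * f (u (s - \<rho> - h)))"
    by (intro continuous_intros kc continuous_on_compose2[OF Fc]) (auto simp: sub)
  moreover have "0 \<le> k \<rho> * f (u (s - \<rho> - h))" if "\<rho> \<in> {0..\<delta>}" for \<rho>
    using f_pos upos[OF sub[OF that]] knn that by (simp add: less_imp_le)
  ultimately show ?thesis unfolding lagged_conv_def
    by (intro integral_nonneg integrable_continuous_interval) auto
qed

lemma delay_conv_nonneg:
  fixes k f z :: "real \<Rightarrow> real"
  assumes "continuous_on {0..\<delta>} k" "\<forall>\<rho>\<in>{0..\<delta>}. k \<rho> \<ge> 0"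
    and "continuous_on {0<..} f" "\<forall>x>0. f x > 0"
    and "continuous_on {t-\<delta>..t} z" "\<And>s. s \<in> {t-\<delta>..t} \<Longrightarrow> z s > 0"
  shows "delay_conv k f \<delta> z t \<ge> 0"
proof -
  have "lagged_conv k f \<delta> 0 z t \<ge> 0" by (rule lagged_conv_nonneg[OF assms]) auto
  then show ?thesis by (simp add: lagged_conv_zero)
qed

lemma lagged_conv_le_integral:
  fixes k f u :: "real \<Rightarrow> real"
  assumes kc: "continuous_on {0..\<delta>} k" and knn: "\<forall>\<rho>\<in>{0..\<delta>}. k \<rho> \<ge> 0"
    and kK: "\<forall>\<rho>\<in>{0..\<delta>}. k \<rho> \<le> K"
    and Fc: "continuous_on {D..t} (\<lambda>r. f (u r))" and Fnn: "\<And>x. x \<in> {D..t} \<Longrightarrow> f (u x) \<ge> 0"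
    and h: "h \<ge> 0" and D: "D \<le> t - h - \<delta>" and \<delta>: "\<delta> > 0"
  shows "lagged_conv k f \<delta> h u t \<le> K * integral {D..t} (\<lambda>r. f (u r))"
proof -
  let ?F = "\<lambda>r. f (u r)"
  have "0 \<in> {0..\<delta>}" using \<delta> by simp
  then have K: "0 \<le> K" using knn kK by (meson order_trans)
  have Fc2: "continuous_on {0..\<delta>} (\<lambda>\<rho>. ?F (t - \<rho> - h))"
    by (rule continuous_on_compose2[OF Fc]) (use D h in \<open>auto intro!: continuous_intros\<close>)
  have "lagged_conv k f \<delta> h u t \<le> integral {0..\<delta>} (\<lambda>\<rho>. K * ?F (t - \<rho> - h))"
    unfolding lagged_conv_def
  proof (rule integral_le)
    show "(\<lambda>\<rho>. k \<rho> * ?F (t - \<rho> - h)) integrable_on {0..\<delta>}"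
      by (rule integrable_continuous_interval, rule continuous_on_mult[OF kc Fc2])
    show "(\<lambda>\<rho>. K * ?F (t - \<rho> - h)) integrable_on {0..\<delta>}"
      by (rule integrable_continuous_interval, rule continuous_on_mult[OF continuous_on_const Fc2])
    fix \<rho> assume r: "\<rho> \<in> {0..\<delta>}"
    have "?F (t - \<rho> - h) \<ge> 0" using Fnn r D h by auto
    then show "k \<rho> * ?F (t - \<rho> - h) \<le> K * ?F (t - \<rho> - h)"
      using kK r by (intro mult_right_mono) auto
  qed
  also have "\<dots> = K * integral {(t-h)-\<delta>..t-h} ?F"
  proof -
    have "integral {(t-h)-\<delta>..t-h} (\<lambda>s. ?F (t - h - (t - h - s))) = integral {0..\<delta>} (\<lambda>\<rho>. ?F (t - \<rho> - h))"
      using integral_reflect_shift[where H="\<lambda>\<rho>. ?F (t - \<rho> - h)" and t="t - h" and \<delta>=\<delta>]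
      by (simp add: algebra_simps)
    then show ?thesis by simp
  qed
  also have "\<dots> \<le> K * integral {D..t} ?F"
    by (intro mult_left_mono K integral_subinterval_le[OF Fc Fnn]) (use D h \<delta> in auto)
  finally show ?thesis .
qed

lemma lagged_conv_le_history:
  fixes k f u :: "real \<Rightarrow> real"
  assumes kc: "continuous_on {0..\<delta>} k" and knn: "\<forall>\<rho>\<in>{0..\<delta>}. k \<rho> \<ge> 0"
    and kK: "\<forall>\<rho>\<in>{0..\<delta>}. k \<rho> \<le> K"
    and Fc: "continuous_on {D..s} (\<lambda>r. f (u r))" and Fnn: "\<And>x. x \<in> {D..s} \<Longrightarrow> f (u x) \<ge> 0"
    and hist: "\<And>r. r \<in> {D..a} \<Longrightarrow> f (u r) \<le> FH" and P0: "(a - D) * FH \<le> P0"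
    and h: "h \<ge> 0" and D: "D \<le> s - h - \<delta>" "D \<le> a" and as: "a \<le> s" and \<delta>: "\<delta> > 0"
  shows "lagged_conv k f \<delta> h u s \<le> K * (P0 + integral {a..s} (\<lambda>r. f (u r)))"
proof -
  let ?F = "\<lambda>r. f (u r)"
  have "0 \<in> {0..\<delta>}" using \<delta> by simp
  then have K: "0 \<le> K" using knn kK by (meson order_trans)
  have "integral {D..s} ?F = integral {D..a} ?F + integral {a..s} ?F"
    using Henstock_Kurzweil_Integration.integral_combine[OF D(2) as integrable_continuous_interval[OF Fc]]
    by simp
  moreover have "integral {D..a} ?F \<le> integral {D..a} (\<lambda>r. FH)"
    by (rule integral_le[OF integrable_continuous_interval[OF continuous_on_subset[OF Fc]]])
       (use hist as in auto)
  ultimately have "integral {D..s} ?F \<le> P0 + integral {a..s} ?F"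
    using D(2) P0 by (simp add: mult.commute)
  then have "K * integral {D..s} ?F \<le> K * (P0 + integral {a..s} ?F)"
    using K by (rule mult_left_mono)
  with lagged_conv_le_integral[where f=f and u=u, OF kc knn kK Fc Fnn h D(1) \<delta>] show ?thesis by simp
qed

lemma method_of_steps:
  fixes k f \<phi> :: "real \<Rightarrow> real"
  assumes kc: "continuous_on {0..\<delta>} k" and knn: "\<forall>\<rho>\<in>{0..\<delta>}. k \<rho> \<ge> 0"
    and f_cont: "continuous_on {0<..} f" and f_pos: "\<forall>x>0. f x > 0"
    and m: "m > 0" and h: "h > 0" and D: "D \<le> a - \<delta> - h" and \<delta>: "\<delta> > 0"
    and \<phi>c: "continuous_on {D..a} \<phi>" and \<phi>m: "\<forall>r\<in>{D..a}. \<phi> r \<ge> m"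
  shows "\<exists>u. continuous_on {D..a + real j * h} u \<and> (\<forall>r\<in>{D..a}. u r = \<phi> r) \<and>
     (\<forall>t\<in>{a..a + real j * h}. u t = \<phi> a + integral {a..t} (lagged_conv k f \<delta> h u)) \<and>
     (\<forall>r\<in>{D..a + real j * h}. u r \<ge> m)"
proof (induction j)
  case 0
  show ?case by (rule exI[of _ \<phi>]) (use \<phi>c \<phi>m in auto)
next
  case (Suc j)
  define c where "c = a + real j * h"
  have c': "a + real (Suc j) * h = c + h" by (simp add: c_def algebra_simps)
  have ac: "a \<le> c" using h by (simp add: c_def)
  obtain u where uc: "continuous_on {D..c} u" and uh: "\<forall>r\<in>{D..a}. u r = \<phi> r"
    and ueq: "\<forall>t\<in>{a..c}. u t = \<phi> a + integral {a..t} (lagged_conv k f \<delta> h u)"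
    and um: "\<forall>r\<in>{D..c}. u r \<ge> m"
    using Suc.IH unfolding c_def by blast
  have upos: "u r > 0" if "r \<in> {D..c}" for r using um that m by force
  define gu where "gu = lagged_conv k f \<delta> h u"
  have Fc: "continuous_on {D..c} (\<lambda>r. f (u r))"
    by (rule continuous_on_compose2[OF f_cont uc]) (use upos in auto)
  have gc: "continuous_on {a..c+h} gu"
    unfolding gu_def by (rule continuous_on_lagged_conv[where f=f and u=u, OF kc Fc]) (use D \<delta> h in auto)
  have gnn: "gu s \<ge> 0" if "s \<in> {a..c+h}" for s
    unfolding gu_def by (rule lagged_conv_nonneg[OF kc knn f_cont f_pos uc upos]) (use that D h in auto)
  have gint: "gu integrable_on {x..y}" if "a \<le> x" "y \<le> c + h" for x y
    by (rule integrable_continuous_interval, rule continuous_on_subset[OF gc]) (use that in auto)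
  define u' where "u' = (\<lambda>t. if t \<le> c then u t else u c + integral {c..t} gu)"
  have gu': "lagged_conv k f \<delta> h u' s = gu s" if "s \<in> {a..c+h}" for s
    unfolding gu_def by (rule lagged_conv_cong) (use that \<delta> in \<open>auto simp: u'_def\<close>)
  have intu': "integral {a..t} (lagged_conv k f \<delta> h u') = integral {a..t} gu" if "t \<le> c + h" for t
    by (rule integral_cong) (use that gu' in auto)
  show ?case
  proof (intro exI[of _ u'] conjI ballI)
    have "continuous_on ({D..c} \<union> {c..c+h}) u'"
    proof (rule continuous_on_closed_Un)
      show "continuous_on {D..c} u'" by (rule continuous_on_eq[OF uc]) (auto simp: u'_def)
      have "continuous_on {c..c+h} (\<lambda>t. u c + integral {c..t} gu)"
        by (intro continuous_intros indefinite_integral_continuous_1 gint) (use ac in auto)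
      then show "continuous_on {c..c+h} u'" by (rule continuous_on_eq) (auto simp: u'_def)
    qed auto
    moreover have "{D..c} \<union> {c..c+h} = {D..c+h}" using D ac h \<delta> by auto
    ultimately show "continuous_on {D..a + real (Suc j) * h} u'" unfolding c' by simp
  next
    fix r assume "r \<in> {D..a}" then show "u' r = \<phi> r" using uh ac by (auto simp: u'_def)
  next
    fix t assume t: "t \<in> {a..a + real (Suc j) * h}"
    show "u' t = \<phi> a + integral {a..t} (lagged_conv k f \<delta> h u')"
    proof (cases "t \<le> c")
      case True
      have "integral {a..t} (lagged_conv k f \<delta> h u) = integral {a..t} gu" by (simp add: gu_def)
      then show ?thesis using ueq True t intu'[of t] h by (auto simp: u'_def c')
    next
      case False
      have "integral {a..c} gu + integral {c..t} gu = integral {a..t} gu"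
        by (rule Henstock_Kurzweil_Integration.integral_combine) (use False ac t c' in \<open>auto intro!: gint\<close>)
      moreover have "u c = \<phi> a + integral {a..c} gu" using ueq ac by (auto simp: gu_def)
      ultimately show ?thesis using False intu'[of t] t c' by (auto simp: u'_def)
    qed
  next
    fix r assume r: "r \<in> {D..a + real (Suc j) * h}"
    show "m \<le> u' r"
    proof (cases "r \<le> c")
      case True then show ?thesis using um r by (auto simp: u'_def)
    next
      case False
      have "integral {c..r} gu \<ge> 0"
        by (rule integral_nonneg) (use False r c' ac gnn in \<open>auto intro!: gint\<close>)
      moreover have "u c \<ge> m" using um ac D h \<delta> by auto
      ultimately show ?thesis using False by (simp add: u'_def)
    qed
  qed
qed

section \<open>Local existence\<close>

lemma uniform_limit_lagged_conv:
  fixes k f z :: "real \<Rightarrow> real" and V :: "nat \<Rightarrow> real \<Rightarrow> real" and h :: "nat \<Rightarrow> real"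
  assumes kc: "continuous_on {0..\<delta>} k" and \<delta>: "0 < \<delta>"
    and f_cont: "continuous_on {0<..} f" and m: "0 < m"
    and Vc: "\<And>n. continuous_on {D..b} (V n)" and zc: "continuous_on {D..b} z"
    and Vb: "\<And>n x. x \<in> {D..b} \<Longrightarrow> V n x \<in> {m..R}" and zb: "\<And>x. x \<in> {D..b} \<Longrightarrow> z x \<in> {m..R}"
    and Vz: "uniform_limit {D..b} V z sequentially"
    and h: "h \<longlonglongrightarrow> 0" and hnn: "\<And>n. 0 \<le> h n" and D: "\<And>n. D \<le> a - \<delta> - h n"
  shows "uniform_limit {a..b} (\<lambda>n. lagged_conv k f \<delta> (h n) (V n)) (lagged_conv k f \<delta> 0 z) sequentially"
proof (rule uniform_limitI)
  fix e :: real assume e: "0 < e"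
  obtain Kk where Kk: "0 < Kk" "\<And>\<rho>. \<rho> \<in> {0..\<delta>} \<Longrightarrow> \<bar>k \<rho>\<bar> \<le> Kk"
    using continuous_on_Icc_upper_bound[OF continuous_on_rabs[OF kc]] by blast
  define e' where "e' = e / (Kk * \<delta> + 1)"
  have Kd: "0 < Kk * \<delta>" using Kk \<delta> by simp
  have e': "0 < e'" "Kk * \<delta> * e' < e"
  proof -
    show "0 < e'" using e Kd by (simp add: e'_def)
    have "Kk * \<delta> * e' = e * (Kk * \<delta> / (Kk * \<delta> + 1))" by (simp add: e'_def)
    also have "\<dots> < e * 1" using e Kd by (intro mult_strict_left_mono) auto
    finally show "Kk * \<delta> * e' < e" by simp
  qed
  have fc: "continuous_on {m..R} f" by (rule continuous_on_subset[OF f_cont]) (use m in auto)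
  have fzc: "continuous_on {D..b} (\<lambda>x. f (z x))"
    by (rule continuous_on_compose2[OF f_cont zc]) (use zb m in force)
  obtain \<theta> where \<theta>: "0 < \<theta>"
    "\<And>x x'. x \<in> {D..b} \<Longrightarrow> x' \<in> {D..b} \<Longrightarrow> dist x' x < \<theta> \<Longrightarrow> dist (f (z x')) (f (z x)) < e'/2"
    using compact_uniformly_continuous[OF fzc compact_Icc] e'(1)
    unfolding uniformly_continuous_on_def by (metis half_gt_zero)
  obtain \<eta> where \<eta>: "0 < \<eta>"
    "\<And>y y'. y \<in> {m..R} \<Longrightarrow> y' \<in> {m..R} \<Longrightarrow> dist y' y < \<eta> \<Longrightarrow> dist (f y') (f y) < e'/2"
    using compact_uniformly_continuous[OF fc compact_Icc] e'(1)
    unfolding uniformly_continuous_on_def by (metis half_gt_zero)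
  have "\<forall>\<^sub>F n in sequentially. (\<forall>x\<in>{D..b}. dist (V n x) (z x) < \<eta>) \<and> h n < \<theta>"
    using uniform_limitD[OF Vz \<eta>(1)] order_tendstoD(2)[OF h \<theta>(1)] by (rule eventually_conj)
  then show "\<forall>\<^sub>F n in sequentially. \<forall>s\<in>{a..b}.
      dist (lagged_conv k f \<delta> (h n) (V n) s) (lagged_conv k f \<delta> 0 z s) < e"
  proof (rule eventually_mono, intro ballI)
    fix n s assume n: "(\<forall>x\<in>{D..b}. dist (V n x) (z x) < \<eta>) \<and> h n < \<theta>" and s: "s \<in> {a..b}"
    have sub: "s - \<rho> - h n \<in> {D..b}" "s - \<rho> \<in> {D..b}" if "\<rho> \<in> {0..\<delta>}" for \<rho>
      using that s D[of n] hnn[of n] by auto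
    have close: "\<bar>f (V n (s - \<rho> - h n)) - f (z (s - \<rho>))\<bar> \<le> e'" if \<rho>: "\<rho> \<in> {0..\<delta>}" for \<rho>
    proof -
      let ?x = "s - \<rho>" and ?x' = "s - \<rho> - h n"
      have "dist (f (z ?x')) (f (z ?x)) < e'/2"
        using \<theta>(2)[OF sub(2)[OF \<rho>] sub(1)[OF \<rho>]] n hnn[of n] by (simp add: dist_real_def)
      moreover have "dist (f (V n ?x')) (f (z ?x')) < e'/2"
        using \<eta>(2)[OF Vb[OF sub(1)[OF \<rho>]] zb[OF sub(1)[OF \<rho>]]] \<eta>(2) n sub(1)[OF \<rho>]
        by (metis dist_commute zb Vb)
      ultimately show ?thesis unfolding dist_real_def by linarith
    qed
    have int: "(\<lambda>\<rho>. k \<rho> * f (u (s - \<rho> - c))) integrable_on {0..\<delta>}"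
      if uc: "continuous_on {D..b} (\<lambda>x. f (u x))" and c: "\<And>\<rho>. \<rho> \<in> {0..\<delta>} \<Longrightarrow> s - \<rho> - c \<in> {D..b}"
      for u c
      by (intro integrable_continuous_interval continuous_on_mult kc continuous_on_compose2[OF uc])
         (auto intro!: continuous_intros c)
    have "0 < V n x" if "x \<in> {D..b}" for x using Vb[OF that, of n] m by auto
    then have fVc: "continuous_on {D..b} (\<lambda>x. f (V n x))"
      by (intro continuous_on_compose2[OF f_cont Vc]) auto
    have "\<bar>lagged_conv k f \<delta> (h n) (V n) s - lagged_conv k f \<delta> 0 z s\<bar>
        = \<bar>integral {0..\<delta>} (\<lambda>\<rho>. k \<rho> * (f (V n (s - \<rho> - h n)) - f (z (s - \<rho> - 0))))\<bar>"
      unfolding lagged_conv_def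
      using integral_diff[OF int[OF fVc sub(1)] int[OF fzc, of 0]] sub(2)
      by (simp add: algebra_simps)
    also have "\<dots> \<le> integral {0..\<delta>} (\<lambda>\<rho>. Kk * e')"
    proof -
      have "norm (integral {0..\<delta>} (\<lambda>\<rho>. k \<rho> * (f (V n (s - \<rho> - h n)) - f (z (s - \<rho> - 0)))))
          \<le> integral {0..\<delta>} (\<lambda>\<rho>. Kk * e')"
      proof (rule integral_norm_bound_integral)
        show "(\<lambda>\<rho>. k \<rho> * (f (V n (s - \<rho> - h n)) - f (z (s - \<rho> - 0)))) integrable_on {0..\<delta>}"
          using integrable_diff[OF int[OF fVc sub(1)] int[OF fzc, of 0]] sub(2)
          by (simp add: algebra_simps)
        fix \<rho> assume \<rho>: "\<rho> \<in> {0..\<delta>}"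
        show "norm (k \<rho> * (f (V n (s - \<rho> - h n)) - f (z (s - \<rho> - 0)))) \<le> Kk * e'"
          unfolding real_norm_def abs_mult using Kk(2)[OF \<rho>] close[OF \<rho>] by (simp add: mult_mono)
      qed auto
      then show ?thesis by simp
    qed
    also have "\<dots> = Kk * \<delta> * e'" using \<delta> by simp
    finally show "dist (lagged_conv k f \<delta> (h n) (V n) s) (lagged_conv k f \<delta> 0 z s) < e"
      using e'(2) by (simp add: dist_real_def)
  qed
qed

lemma lagged_solution_bounded:
  fixes k f :: "real \<Rightarrow> real"
  assumes kc: "continuous_on {0..\<delta>} k" and knn: "\<forall>\<rho>\<in>{0..\<delta>}. k \<rho> \<ge> 0" and \<delta>: "\<delta> > 0"
    and f_cont: "continuous_on {0<..} f" and f_pos: "\<forall>x>0. f x > 0"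
    and f_asymp: "asymp_increasing f" and osgood: "osgood_condition f"
    and L: "0 < L" and m: "0 < m"
  obtains R where "\<And>h u r. 0 \<le> h \<Longrightarrow> h \<le> L \<Longrightarrow> continuous_on {a-\<delta>-L..a+L} u \<Longrightarrow>
      (\<And>r. r \<in> {a-\<delta>-L..a+L} \<Longrightarrow> m \<le> u r) \<Longrightarrow> (\<And>r. r \<in> {a-\<delta>-L..a} \<Longrightarrow> u r \<le> M) \<Longrightarrow>
      (\<And>t. t \<in> {a..a+L} \<Longrightarrow> u t = u a + integral {a..t} (lagged_conv k f \<delta> h u)) \<Longrightarrow>
      r \<in> {a-\<delta>-L..a+L} \<Longrightarrow> u r \<le> R"
proof -
  define D where "D = a - \<delta> - L"
  obtain K where K: "0 < K" "\<And>\<rho>. \<rho> \<in> {0..\<delta>} \<Longrightarrow> k \<rho> \<le> K"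
    using continuous_on_Icc_upper_bound[OF kc] by blast
  obtain FH where FH: "0 < FH" "\<And>y. y \<in> {m..M} \<Longrightarrow> f y \<le> FH"
    using continuous_on_Icc_upper_bound[OF continuous_on_subset[OF f_cont]] m by (metis atLeastAtMost_iff
      greaterThan_iff less_le_trans subsetI)
  define P0 where "P0 = (\<delta> + L) * FH + 1"
  have P0: "0 < P0" using \<delta> L FH by (simp add: P0_def add_pos_pos)
  obtain R where R: "\<And>a' b z d t. a' \<le> b \<Longrightarrow> b - a' \<le> L \<Longrightarrow> continuous_on {a'..b} z \<Longrightarrow>
      (\<And>t. t \<in> {a'..b} \<Longrightarrow> (z has_real_derivative d t) (at t within {a'..b})) \<Longrightarrow>
      (\<And>t. t \<in> {a'..b} \<Longrightarrow> d t \<le> K * (P0 + integral {a'..t} (\<lambda>s. f (z s)))) \<Longrightarrow>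
      z a' \<le> M \<Longrightarrow> (\<And>t. t \<in> {a'..b} \<Longrightarrow> z t \<ge> m) \<Longrightarrow> t \<in> {a'..b} \<Longrightarrow> z t \<le> R"
    by (rule uniform_apriori_bound[OF f_cont f_pos f_asymp osgood m K(1) P0, of L M]) blast
  show ?thesis
  proof (rule that[of "max R M"])
    fix h u r
    assume h: "0 \<le> h" "h \<le> L" and uc: "continuous_on {a-\<delta>-L..a+L} u"
      and um: "\<And>r. r \<in> {a-\<delta>-L..a+L} \<Longrightarrow> m \<le> u r" and uM: "\<And>r. r \<in> {a-\<delta>-L..a} \<Longrightarrow> u r \<le> M"
      and ueq: "\<And>t. t \<in> {a..a+L} \<Longrightarrow> u t = u a + integral {a..t} (lagged_conv k f \<delta> h u)"
      and r: "r \<in> {a-\<delta>-L..a+L}"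
    have Fc: "continuous_on {D..a+L} (\<lambda>r. f (u r))"
      unfolding D_def by (rule continuous_on_compose2[OF f_cont uc]) (use um m in force)
    have Fnn: "0 \<le> f (u x)" if "x \<in> {D..a+L}" for x
      using f_pos um[of x] m that by (simp add: D_def less_imp_le)
    have gc: "continuous_on {a..a+L} (lagged_conv k f \<delta> h u)"
      by (rule continuous_on_lagged_conv[where f=f and u=u, OF kc Fc]) (use h \<delta> in \<open>auto simp: D_def\<close>)
    show "u r \<le> max R M"
    proof (cases "r \<le> a")
      case True then show ?thesis using uM[of r] r by auto
    next
      case False
      have "u r \<le> R"
      proof (rule R[of a "a+L" u "lagged_conv k f \<delta> h u"])
        show "continuous_on {a..a+L} u" by (rule continuous_on_subset[OF uc]) (use \<delta> L in auto)
        fix s assume s: "s \<in> {a..a+L}"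
        show "(u has_real_derivative lagged_conv k f \<delta> h u s) (at s within {a..a+L})"
          by (rule integral_equation_imp_has_derivative[OF gc ueq s])
        show "lagged_conv k f \<delta> h u s \<le> K * (P0 + integral {a..s} (\<lambda>s. f (u s)))"
        proof (rule lagged_conv_le_history[where f=f and u=u, OF kc knn _ continuous_on_subset[OF Fc]])
          show "f (u r) \<le> FH" if "r \<in> {D..a}" for r
            using FH(2)[of "u r"] um[of r] uM[of r] that \<delta> L by (auto simp: D_def)
        qed (use K s h \<delta> L Fnn in \<open>auto simp: D_def P0_def\<close>)
        show "m \<le> u s" using um[of s] s \<delta> by auto
      qed (use L False r uM[of a] \<delta> in auto)
      then show ?thesis by simp
    qed
  qed
qed

lemma lagged_conv_abs_le:
  fixes k f u :: "real \<Rightarrow> real"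
  assumes kc: "continuous_on {0..\<delta>} k" and knn: "\<forall>\<rho>\<in>{0..\<delta>}. k \<rho> \<ge> 0"
    and kK: "\<And>\<rho>. \<rho> \<in> {0..\<delta>} \<Longrightarrow> k \<rho> \<le> K" and \<delta>: "0 < \<delta>"
    and f_cont: "continuous_on {0<..} f" and f_pos: "\<forall>x>0. f x > 0"
    and fB: "\<And>y. y \<in> {m..R} \<Longrightarrow> f y \<le> B" and m: "0 < m"
    and uc: "continuous_on S u" and ub: "\<And>r. r \<in> S \<Longrightarrow> u r \<in> {m..R}"
    and sub: "\<And>\<rho>. \<rho> \<in> {0..\<delta>} \<Longrightarrow> s - \<rho> - h \<in> S"
  shows "\<bar>lagged_conv k f \<delta> h u s\<bar> \<le> K * \<delta> * B"
proof -
  have upos: "0 < u r" if "r \<in> S" for r using ub[OF that] m by auto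
  have "0 \<le> lagged_conv k f \<delta> h u s"
    by (rule lagged_conv_nonneg[OF kc knn f_cont f_pos uc upos sub])
  moreover have "lagged_conv k f \<delta> h u s \<le> integral {0..\<delta>} (\<lambda>\<rho>. K * B)"
    unfolding lagged_conv_def
  proof (rule integral_le)
    have "continuous_on S (\<lambda>r. f (u r))"
      by (rule continuous_on_compose2[OF f_cont uc]) (use upos in auto)
    then have "continuous_on {0..\<delta>} (\<lambda>\<rho>. f (u (s - \<rho> - h)))"
      by (rule continuous_on_compose2, intro continuous_intros) (use sub in auto)
    then show "(\<lambda>\<rho>. k \<rho> * f (u (s - \<rho> - h))) integrable_on {0..\<delta>}"
      by (intro integrable_continuous_interval continuous_on_mult kc)
    fix \<rho> assume r: "\<rho> \<in> {0..\<delta>}"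
    have "f (u (s - \<rho> - h)) \<le> B" using fB ub[OF sub[OF r]] by simp
    moreover have "0 \<le> f (u (s - \<rho> - h))" using f_pos upos[OF sub[OF r]] by (simp add: less_imp_le)
    moreover have "0 \<le> k \<rho>" "k \<rho> \<le> K" using knn kK r by auto
    ultimately show "k \<rho> * f (u (s - \<rho> - h)) \<le> K * B"
      by (intro mult_mono) auto
  qed auto
  ultimately show ?thesis using \<delta> by (simp add: mult.commute mult.left_commute)
qed

lemma lagged_approximations_limit:
  fixes k f \<phi> :: "real \<Rightarrow> real" and U :: "nat \<Rightarrow> real \<Rightarrow> real" and h :: "nat \<Rightarrow> real"
  assumes kc: "continuous_on {0..\<delta>} k" and knn: "\<forall>\<rho>\<in>{0..\<delta>}. k \<rho> \<ge> 0" and \<delta>: "\<delta> > 0"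
    and f_cont: "continuous_on {0<..} f" and f_pos: "\<forall>x>0. f x > 0"
    and L: "L > 0" and D: "D = a - \<delta> - L" and m: "0 < m"
    and \<phi>c: "continuous_on {D..a} \<phi>"
    and h: "\<And>n. 0 < h n" "\<And>n. h n \<le> L" "h \<longlonglongrightarrow> 0"
    and Uc: "\<And>n. continuous_on {D..a+L} (U n)" and Uh: "\<And>n r. r \<in> {D..a} \<Longrightarrow> U n r = \<phi> r"
    and Ueq: "\<And>n t. t \<in> {a..a+L} \<Longrightarrow> U n t = \<phi> a + integral {a..t} (lagged_conv k f \<delta> (h n) (U n))"
    and Um: "\<And>n r. r \<in> {D..a+L} \<Longrightarrow> m \<le> U n r" and R: "\<And>n r. r \<in> {D..a+L} \<Longrightarrow> U n r \<le> R"
  shows "\<exists>z. continuous_on {D..a+L} z \<and> (\<forall>t\<in>{D..a+L}. z t \<in> {m..R}) \<and> (\<forall>t\<in>{D..a}. z t = \<phi> t) \<and>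
    (\<forall>t\<in>{a..a+L}. z t = \<phi> a + integral {a..t} (lagged_conv k f \<delta> 0 z))"
proof -
  have DL: "D \<le> a" "a \<le> a + L" "{D..a} \<union> {a..a+L} = {D..a+L}" using \<delta> L by (auto simp: D)
  have Ua: "U n a = \<phi> a" for n using Uh[of a n] DL by simp
  have Upos: "0 < U n r" if "r \<in> {D..a+L}" for n r using m Um[OF that, of n] by linarith
  have gUc: "continuous_on {a..a+L} (lagged_conv k f \<delta> (h n) (U n))" for n
    by (rule continuous_on_lagged_conv[where f=f and u="U n", OF kc continuous_on_compose2[OF f_cont Uc]])
       (use Upos h(1,2)[of n] \<delta> in \<open>auto simp: D less_imp_le\<close>)
  have "continuous_on {m..R} f" by (rule continuous_on_subset[OF f_cont]) (use m in auto)
  then obtain FB where FB: "\<And>y. y \<in> {m..R} \<Longrightarrow> f y \<le> FB"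
    using continuous_on_Icc_upper_bound by blast
  obtain K where K: "0 < K" "\<And>\<rho>. \<rho> \<in> {0..\<delta>} \<Longrightarrow> k \<rho> \<le> K"
    using continuous_on_Icc_upper_bound[OF kc] by blast
  have gb: "\<bar>lagged_conv k f \<delta> (h n) (U n) s\<bar> \<le> K * \<delta> * FB" if s: "s \<in> {a..a+L}" for n s
    by (rule lagged_conv_abs_le[OF kc knn K(2) \<delta> f_cont f_pos FB m Uc])
       (use Um R s h(1,2)[of n] in \<open>auto simp: D\<close>)
  obtain g0 r where g0c: "continuous_on {a..a+L} g0" and r: "strict_mono (r :: nat \<Rightarrow> nat)"
    and g0lim: "uniform_limit {a..a+L} (\<lambda>n. U (r n)) g0 sequentially"
  proof (rule Arzela_Ascoli_lipschitz[of a "a+L" U R "K * \<delta> * FB"])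
    show "\<bar>U n x - U n y\<bar> \<le> K * \<delta> * FB * \<bar>x - y\<bar>" if "x \<in> {a..a+L}" "y \<in> {a..a+L}" for n x y
      using integral_equation_lipschitz[OF gUc Ueq gb that(2,1)] by simp
    have "a \<in> {a..a+L}" using L by simp
    from gb[OF this, of 0] show "0 \<le> K * \<delta> * FB" by linarith
    show "\<bar>U n x\<bar> \<le> R" if "x \<in> {a..a+L}" for n x
      using R[of x n] Upos[of x n] that DL by auto
  qed (rule that)
  have g0a: "g0 a = \<phi> a"
  proof -
    have "(\<lambda>n. U (r n) a) \<longlonglongrightarrow> g0 a" by (rule tendsto_uniform_limitI[OF g0lim]) (use L in simp)
    then show ?thesis using Ua by (simp add: LIMSEQ_const_iff)
  qed
  define z where "z = (\<lambda>x. if x \<le> a then \<phi> x else g0 x)"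
  have Uz: "uniform_limit {D..a+L} (\<lambda>n. U (r n)) z sequentially"
    unfolding uniform_limit_sequentially_iff
  proof (intro allI impI)
    fix e :: real assume e: "0 < e"
    then obtain N where N: "\<forall>n\<ge>N. \<forall>x\<in>{a..a+L}. dist (U (r n) x) (g0 x) < e"
      using g0lim unfolding uniform_limit_sequentially_iff by blast
    show "\<exists>N. \<forall>n\<ge>N. \<forall>x\<in>{D..a+L}. dist (U (r n) x) (z x) < e"
      using N Uh e by (intro exI[of _ N]) (auto simp: z_def)
  qed
  have zb: "z x \<in> {m..R}" if x: "x \<in> {D..a+L}" for x
    using LIMSEQ_le_const[OF tendsto_uniform_limitI[OF Uz x]] Um[OF x]
      LIMSEQ_le_const2[OF tendsto_uniform_limitI[OF Uz x]] R[OF x] by auto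
  have zc: "continuous_on {D..a+L} z"
  proof -
    have "continuous_on ({D..a} \<union> {a..a+L}) z"
    proof (rule continuous_on_closed_Un)
      show "continuous_on {D..a} z" by (rule continuous_on_eq[OF \<phi>c]) (auto simp: z_def)
      show "continuous_on {a..a+L} z" by (rule continuous_on_eq[OF g0c]) (auto simp: z_def g0a)
    qed auto
    then show ?thesis using DL by simp
  qed
  have hr: "(\<lambda>n. h (r n)) \<longlonglongrightarrow> 0" using LIMSEQ_subseq_LIMSEQ[OF h(3) r] by (simp add: o_def)
  have lim: "uniform_limit {a..a+L} (\<lambda>n. lagged_conv k f \<delta> (h (r n)) (U (r n)))
      (lagged_conv k f \<delta> 0 z) sequentially"
    by (rule uniform_limit_lagged_conv[OF kc \<delta> f_cont m Uc zc _ zb Uz hr])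
       (use Um R h in \<open>auto simp: D less_imp_le\<close>)
  have zeq: "z t = \<phi> a + integral {a..t} (lagged_conv k f \<delta> 0 z)" if t: "t \<in> {a..a+L}" for t
  proof (rule integral_equation_limit)
    show "uniform_limit {a..t} (\<lambda>n. lagged_conv k f \<delta> (h (r n)) (U (r n))) (lagged_conv k f \<delta> 0 z) sequentially"
      by (rule uniform_limit_on_subset[OF lim]) (use t in auto)
    show "continuous_on {a..t} (lagged_conv k f \<delta> (h (r n)) (U (r n)))" for n
      by (rule continuous_on_subset[OF gUc]) (use t in auto)
    show "U (r n) t = \<phi> a + integral {a..t} (lagged_conv k f \<delta> (h (r n)) (U (r n)))" for n
      using Ueq[OF t] by simp
    show "(\<lambda>n. U (r n) t) \<longlonglongrightarrow> z t" by (rule tendsto_uniform_limitI[OF Uz]) (use t DL in auto)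
  qed
  show ?thesis using zc zb zeq by (intro exI[of _ z]) (auto simp: z_def)
qed

lemma local_integral_solution:
  fixes k f \<phi> :: "real \<Rightarrow> real"
  assumes kc: "continuous_on {0..\<delta>} k" and knn: "\<forall>\<rho>\<in>{0..\<delta>}. k \<rho> \<ge> 0" and \<delta>: "\<delta> > 0"
    and f_cont: "continuous_on {0<..} f" and f_pos: "\<forall>x>0. f x > 0"
    and f_asymp: "asymp_increasing f" and osgood: "osgood_condition f"
    and L: "L > 0"
    and \<phi>c: "continuous_on {a-\<delta>..a} \<phi>" and \<phi>p: "\<forall>t\<in>{a-\<delta>..a}. \<phi> t > 0"
  shows "\<exists>z. continuous_on {a-\<delta>..a+L} z \<and> (\<forall>t\<in>{a-\<delta>..a+L}. z t > 0) \<and> (\<forall>t\<in>{a-\<delta>..a}. z t = \<phi> t) \<and>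
    (\<forall>t\<in>{a..a+L}. z t = \<phi> a + integral {a..t} (lagged_conv k f \<delta> 0 z))"
proof -
  define D where "D = a - \<delta> - L"
  have DL: "D \<le> a" using \<delta> L by (simp add: D_def)
  \<comment> \<open>The history is extended constantly to the left so that all lags up to \<open>L\<close> are defined.\<close>
  define \<phi>e where "\<phi>e = (\<lambda>r. \<phi> (max r (a - \<delta>)))"
  have \<phi>ec: "continuous_on {D..a} \<phi>e"
    unfolding \<phi>e_def by (rule continuous_on_compose2[OF \<phi>c]) (use \<delta> in \<open>auto intro!: continuous_intros\<close>)
  have \<phi>ea: "\<phi>e a = \<phi> a" using \<delta> by (simp add: \<phi>e_def)
  obtain m where m: "0 < m" "\<And>r. r \<in> {a-\<delta>..a} \<Longrightarrow> m \<le> \<phi> r"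
    using continuous_on_Icc_pos_lower_bound[OF \<phi>c] \<phi>p by blast
  obtain M where M: "\<And>r. r \<in> {a-\<delta>..a} \<Longrightarrow> \<phi> r \<le> M"
    using continuous_on_Icc_upper_bound[OF \<phi>c] by blast
  have \<phi>em: "m \<le> \<phi>e r" "\<phi>e r \<le> M" if "r \<in> {D..a}" for r
    using m(2)[of "max r (a-\<delta>)"] M[of "max r (a-\<delta>)"] that \<delta> by (auto simp: \<phi>e_def D_def)
  define h where "h = (\<lambda>n::nat. L / real (Suc n))"
  have h: "0 < h n" "h n \<le> L" for n using L by (auto simp: h_def field_simps)
  define P where "P = (\<lambda>n u. continuous_on {D..a+L} u \<and> (\<forall>r\<in>{D..a}. u r = \<phi>e r) \<and>
     (\<forall>t\<in>{a..a+L}. u t = \<phi>e a + integral {a..t} (lagged_conv k f \<delta> (h n) u)) \<and>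
     (\<forall>r\<in>{D..a+L}. m \<le> u r))"
  have "\<exists>u. P n u" for n
  proof -
    have D: "D \<le> a - \<delta> - h n" using h[of n] by (simp add: D_def)
    have "real (Suc n) * h n = L" by (simp add: h_def)
    then show ?thesis
      using method_of_steps[OF kc knn f_cont f_pos m(1) h(1) D \<delta> \<phi>ec, of "Suc n"] \<phi>em
      unfolding P_def by auto
  qed
  then obtain U where U: "\<And>n. P n (U n)" by metis
  have Uc: "continuous_on {D..a+L} (U n)" and Uh: "\<And>r. r \<in> {D..a} \<Longrightarrow> U n r = \<phi>e r"
    and Ueq: "\<And>t. t \<in> {a..a+L} \<Longrightarrow> U n t = \<phi>e a + integral {a..t} (lagged_conv k f \<delta> (h n) (U n))"
    and Um: "\<And>r. r \<in> {D..a+L} \<Longrightarrow> m \<le> U n r" for n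
    using U[of n] unfolding P_def by auto
  have Ua: "U n a = \<phi> a" for n using Uh[of a n] DL \<phi>ea by simp
  obtain R where R0: "\<And>h u r. 0 \<le> h \<Longrightarrow> h \<le> L \<Longrightarrow> continuous_on {a-\<delta>-L..a+L} u \<Longrightarrow>
      (\<And>r. r \<in> {a-\<delta>-L..a+L} \<Longrightarrow> m \<le> u r) \<Longrightarrow> (\<And>r. r \<in> {a-\<delta>-L..a} \<Longrightarrow> u r \<le> M) \<Longrightarrow>
      (\<And>t. t \<in> {a..a+L} \<Longrightarrow> u t = u a + integral {a..t} (lagged_conv k f \<delta> h u)) \<Longrightarrow>
      r \<in> {a-\<delta>-L..a+L} \<Longrightarrow> u r \<le> R"
    by (rule lagged_solution_bounded[OF kc knn \<delta> f_cont f_pos f_asymp osgood L m(1)]) blast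
  have R: "U n r \<le> R" if r: "r \<in> {D..a+L}" for n r
  proof (rule R0[of "h n" "U n"])
    fix t assume "t \<in> {a..a+L}"
    then show "U n t = U n a + integral {a..t} (lagged_conv k f \<delta> (h n) (U n))"
      using Ueq[of t n] Ua[of n] \<phi>ea by simp
  qed (use h[of n] Uc Um Uh \<phi>em r in \<open>auto simp: D_def\<close>)
  have hlim: "h \<longlonglongrightarrow> 0" unfolding h_def using LIMSEQ_Suc[OF lim_const_over_n[of L]] by simp
  obtain z where zc: "continuous_on {D..a+L} z" and zb: "\<forall>t\<in>{D..a+L}. z t \<in> {m..R}"
    and zh: "\<forall>t\<in>{D..a}. z t = \<phi>e t"
    and zeq: "\<forall>t\<in>{a..a+L}. z t = \<phi>e a + integral {a..t} (lagged_conv k f \<delta> 0 z)"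
    using lagged_approximations_limit[OF kc knn \<delta> f_cont f_pos L D_def m(1) \<phi>ec h(1,2) hlim Uc Uh Ueq Um R]
    by blast
  show ?thesis
  proof (intro exI[of _ z] conjI ballI)
    show "continuous_on {a-\<delta>..a+L} z" by (rule continuous_on_subset[OF zc]) (use L in \<open>auto simp: D_def\<close>)
    fix t assume "t \<in> {a-\<delta>..a+L}"
    then have "t \<in> {D..a+L}" using L by (simp add: D_def)
    then show "z t > 0" using zb m(1) by force
  next
    fix t assume "t \<in> {a-\<delta>..a}" then show "z t = \<phi> t" using zh L by (simp add: \<phi>e_def D_def)
  next
    fix t assume "t \<in> {a..a+L}" then show "z t = \<phi> a + integral {a..t} (lagged_conv k f \<delta> 0 z)"
      using zeq \<phi>ea by simp
  qed
qed

section \<open>Continuation of solutions\<close>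

lemma delay_sol_Icc_iff:
  assumes "a \<le> b" "0 \<le> \<delta>"
  shows "delay_sol k f \<delta> a \<phi> {a..b} z \<longleftrightarrow>
    continuous_on {a-\<delta>..b} z \<and> (\<forall>t\<in>{a-\<delta>..b}. 0 < z t) \<and> (\<forall>t\<in>{a-\<delta>..a}. z t = \<phi> t) \<and>
    (\<forall>t\<in>{a..b}. (z has_real_derivative delay_conv k f \<delta> z t) (at t within {a..b}))"
proof -
  have "{a-\<delta>..a} \<union> {a..b} = {a-\<delta>..b}" using assms by auto
  then show ?thesis by (simp add: delay_sol_def)
qed

lemma delay_sol_Icc_restrict:
  assumes sol: "delay_sol k f \<delta> a \<phi> {a..b} z" and c: "a \<le> c" "c \<le> b" and \<delta>: "0 \<le> \<delta>"
  shows "delay_sol k f \<delta> a \<phi> {a..c} z"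
  using sol c \<delta> unfolding delay_sol_Icc_iff[OF c(1) \<delta>] delay_sol_Icc_iff[OF order_trans[OF c] \<delta>]
proof (intro conjI ballI; elim conjE)
  fix t assume "t \<in> {a..c}"
    and "\<forall>t\<in>{a..b}. (z has_real_derivative delay_conv k f \<delta> z t) (at t within {a..b})"
  then have "(z has_real_derivative delay_conv k f \<delta> z t) (at t within {a..b})" using c by auto
  then show "(z has_real_derivative delay_conv k f \<delta> z t) (at t within {a..c})"
    by (rule has_field_derivative_subset) (use c in auto)
next
  assume "continuous_on {a-\<delta>..b} z"
  then show "continuous_on {a-\<delta>..c} z" by (rule continuous_on_subset) (use c in auto)
qed auto

lemma delay_sol_Icc_cong:
  assumes sol: "delay_sol k f \<delta> a \<phi> {a..b} z" and eq: "\<And>t. t \<in> {a-\<delta>..b} \<Longrightarrow> w t = z t"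
    and ab: "a \<le> b" and \<delta>: "0 \<le> \<delta>"
  shows "delay_sol k f \<delta> a \<phi> {a..b} w"
  unfolding delay_sol_Icc_iff[OF ab \<delta>]
proof (intro conjI ballI)
  have zc: "continuous_on {a-\<delta>..b} z" and zp: "\<forall>t\<in>{a-\<delta>..b}. 0 < z t"
    and zh: "\<forall>t\<in>{a-\<delta>..a}. z t = \<phi> t"
    using sol unfolding delay_sol_Icc_iff[OF ab \<delta>] by auto
  show "continuous_on {a-\<delta>..b} w" by (rule continuous_on_eq[OF zc]) (simp add: eq)
  show "0 < w t" if "t \<in> {a-\<delta>..b}" for t using zp eq that by simp
  show "w t = \<phi> t" if "t \<in> {a-\<delta>..a}" for t using zh eq that ab by simp
  fix t assume t: "t \<in> {a..b}"
  have "delay_conv k f \<delta> w t = delay_conv k f \<delta> z t" by (rule delay_conv_cong) (use eq t in auto)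
  moreover have "(z has_real_derivative delay_conv k f \<delta> z t) (at t within {a..b})"
    using sol t unfolding delay_sol_Icc_iff[OF ab \<delta>] by blast
  ultimately have "(z has_real_derivative delay_conv k f \<delta> w t) (at t within {a..b})" by simp
  then show "(w has_real_derivative delay_conv k f \<delta> w t) (at t within {a..b})"
    by (rule has_field_derivative_transform_within[where d=1]) (use eq t \<delta> in auto)
qed

lemma local_delay_sol:
  fixes k f \<phi> :: "real \<Rightarrow> real"
  assumes kc: "continuous_on {0..\<delta>} k" and knn: "\<forall>\<rho>\<in>{0..\<delta>}. k \<rho> \<ge> 0" and \<delta>: "\<delta> > 0"
    and f_cont: "continuous_on {0<..} f" and f_pos: "\<forall>x>0. f x > 0"
    and f_asymp: "asymp_increasing f" and osgood: "osgood_condition f"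
    and L: "L > 0"
    and \<phi>c: "continuous_on {a-\<delta>..a} \<phi>" and \<phi>p: "\<forall>t\<in>{a-\<delta>..a}. \<phi> t > 0"
  shows "\<exists>z. delay_sol k f \<delta> a \<phi> {a..a+L} z"
proof -
  obtain z where zc: "continuous_on {a-\<delta>..a+L} z" and zp: "\<forall>t\<in>{a-\<delta>..a+L}. z t > 0"
    and zh: "\<forall>t\<in>{a-\<delta>..a}. z t = \<phi> t"
    and zeq: "\<forall>t\<in>{a..a+L}. z t = \<phi> a + integral {a..t} (lagged_conv k f \<delta> 0 z)"
    using local_integral_solution[OF kc knn \<delta> f_cont f_pos f_asymp osgood L \<phi>c \<phi>p] by blast
  have gc: "continuous_on {a..a+L} (lagged_conv k f \<delta> 0 z)"
    by (rule continuous_on_lagged_conv[where f=f and u=z, OF kc continuous_on_compose2[OF f_cont zc]])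
       (use zp in auto)
  have "(z has_real_derivative lagged_conv k f \<delta> 0 z t) (at t within {a..a+L})" if t: "t \<in> {a..a+L}" for t
    by (rule integral_equation_imp_has_derivative[OF gc _ t]) (use zeq in blast)
  then have "\<forall>t\<in>{a..a+L}. (z has_real_derivative delay_conv k f \<delta> z t) (at t within {a..a+L})"
    by (simp add: lagged_conv_zero)
  moreover have "a \<le> a + L" "0 \<le> \<delta>" using L \<delta> by auto
  ultimately have "delay_sol k f \<delta> a \<phi> {a..a+L} z"
    using zc zp zh by (simp add: delay_sol_Icc_iff)
  then show ?thesis by blast
qed

lemma delay_sol_glue:
  assumes ab: "a \<le> b" and bc: "b \<le> c" and \<delta>: "\<delta> > 0"
    and s1: "delay_sol k f \<delta> a \<phi> {a..b} z1" and s2: "delay_sol k f \<delta> b z1 {b..c} z2"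
  shows "delay_sol k f \<delta> a \<phi> {a..c} (\<lambda>t. if t \<le> b then z1 t else z2 t)"
proof -
  define z where "z = (\<lambda>t. if t \<le> b then z1 t else z2 t)"
  from s1 have c1: "continuous_on {a-\<delta>..b} z1" and p1: "\<forall>t\<in>{a-\<delta>..b}. 0 < z1 t"
    and h1: "\<forall>t\<in>{a-\<delta>..a}. z1 t = \<phi> t"
    and d1: "\<forall>t\<in>{a..b}. (z1 has_real_derivative delay_conv k f \<delta> z1 t) (at t within {a..b})"
    unfolding delay_sol_Icc_iff[OF ab less_imp_le[OF \<delta>]] by auto
  from s2 have c2: "continuous_on {b-\<delta>..c} z2" and p2: "\<forall>t\<in>{b-\<delta>..c}. 0 < z2 t"
    and h2: "\<forall>t\<in>{b-\<delta>..b}. z2 t = z1 t"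
    and d2: "\<forall>t\<in>{b..c}. (z2 has_real_derivative delay_conv k f \<delta> z2 t) (at t within {b..c})"
    unfolding delay_sol_Icc_iff[OF bc less_imp_le[OF \<delta>]] by auto
  have conv1: "delay_conv k f \<delta> z t = delay_conv k f \<delta> z1 t" if "t \<le> b" for t
    by (rule delay_conv_cong) (use that in \<open>auto simp: z_def\<close>)
  have conv2: "delay_conv k f \<delta> z t = delay_conv k f \<delta> z2 t" if "t \<ge> b" for t
    by (rule delay_conv_cong) (use that h2 in \<open>auto simp: z_def\<close>)
  have "continuous_on ({a-\<delta>..b} \<union> {b..c}) z"
  proof (rule continuous_on_closed_Un)
    show "continuous_on {a-\<delta>..b} z" by (rule continuous_on_eq[OF c1]) (auto simp: z_def)
    have "continuous_on {b..c} z2" by (rule continuous_on_subset[OF c2]) (use \<delta> in auto)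
    then show "continuous_on {b..c} z" by (rule continuous_on_eq) (use h2 \<delta> in \<open>auto simp: z_def\<close>)
  qed auto
  moreover have "{a-\<delta>..b} \<union> {b..c} = {a-\<delta>..c}" using ab bc \<delta> by auto
  ultimately have zc: "continuous_on {a-\<delta>..c} z" by simp
  have zd: "(z has_real_derivative delay_conv k f \<delta> z t) (at t within {a..c})" if t: "t \<in> {a..c}" for t
  proof -
    have left: "(z has_real_derivative delay_conv k f \<delta> z t) (at t within {a..b})" if tb: "t \<le> b"
    proof -
      have "(z1 has_real_derivative delay_conv k f \<delta> z1 t) (at t within {a..b})" using d1 t tb by auto
      then show ?thesis unfolding conv1[OF tb]
        by (rule has_field_derivative_transform_within[where d=1]) (use t tb in \<open>auto simp: z_def\<close>)
    qed
    have right: "(z has_real_derivative delay_conv k f \<delta> z t) (at t within {b..c})" if tb: "t \<ge> b"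
    proof -
      have "(z2 has_real_derivative delay_conv k f \<delta> z2 t) (at t within {b..c})" using d2 t tb by auto
      then show ?thesis unfolding conv2[OF tb]
        by (rule has_field_derivative_transform_within[where d=1]) (use t tb h2 \<delta> in \<open>auto simp: z_def\<close>)
    qed
    consider "t < b" | "t = b" | "t > b" by linarith
    then show ?thesis
    proof cases
      case 1
      have "at t within {a..c} = at t within {a..b}"
        by (rule at_within_nhd[where S="{..<b}"]) (use 1 bc in auto)
      then show ?thesis using left 1 by simp
    next
      case 2
      have "{a..c} = {a..b} \<union> {b..c}" using ab bc by auto
      then show ?thesis using has_real_derivative_within_Un[OF left right] 2 by simp
    next
      case 3
      have "at t within {a..c} = at t within {b..c}"
        by (rule at_within_nhd[where S="{b<..}"]) (use 3 ab in auto)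
      then show ?thesis using right 3 by simp
    qed
  qed
  show ?thesis unfolding delay_sol_Icc_iff[OF order_trans[OF ab bc] less_imp_le[OF \<delta>]] z_def[symmetric]
  proof (intro conjI ballI)
    show "continuous_on {a-\<delta>..c} z" by (rule zc)
    fix t assume t: "t \<in> {a-\<delta>..c}" show "0 < z t"
      using p1 p2 t \<delta> by (auto simp: z_def)
  next
    fix t assume t: "t \<in> {a-\<delta>..a}" show "z t = \<phi> t" using h1 t ab by (auto simp: z_def)
  qed (rule zd)
qed

lemma delay_sol_Ici_of_Icc:
  assumes all: "\<And>c. b0 \<le> c \<Longrightarrow> delay_sol k f \<delta> a \<phi> {a..c} z" and ab: "a \<le> b0" and \<delta>: "0 \<le> \<delta>"
  shows "delay_sol k f \<delta> a \<phi> {a..} z"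
proof -
  have sol: "continuous_on {a-\<delta>..c} z \<and> (\<forall>t\<in>{a-\<delta>..c}. 0 < z t) \<and> (\<forall>t\<in>{a-\<delta>..a}. z t = \<phi> t) \<and>
      (\<forall>t\<in>{a..c}. (z has_real_derivative delay_conv k f \<delta> z t) (at t within {a..c}))" if "b0 \<le> c" for c
    using all[OF that] delay_sol_Icc_iff[of a c \<delta>] that ab \<delta> by simp
  define cc where "cc = (\<lambda>t::real. max b0 t + 1)"
  have cc: "b0 \<le> cc t" "t < cc t" for t by (auto simp: cc_def)
  have Un: "{a-\<delta>..a} \<union> {a..} = {a-\<delta>..}" using \<delta> by auto
  show ?thesis unfolding delay_sol_def Un
  proof (intro conjI ballI)
    show "continuous_on {a-\<delta>..} z"
    proof (clarsimp simp: continuous_on_eq_continuous_within)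
      fix t assume t: "a - \<delta> \<le> t"
      have "continuous (at t within {a-\<delta>..cc t}) z"
        using sol[OF cc(1)[of t]] t cc(2)[of t] by (simp add: continuous_on_eq_continuous_within)
      moreover have "at t within {a-\<delta>..cc t} = at t within {a-\<delta>..}"
        by (rule at_within_nhd[where S="{..<cc t}"]) (use cc(2)[of t] in auto)
      ultimately show "continuous (at t within {a-\<delta>..}) z" by simp
    qed
    show "0 < z t" if "t \<in> {a-\<delta>..}" for t using sol[OF cc(1)[of t]] that cc(2)[of t] by auto
    show "z t = \<phi> t" if "t \<in> {a-\<delta>..a}" for t using sol[OF order_refl] that by auto
    fix t assume t: "t \<in> {a..}"
    have "(z has_real_derivative delay_conv k f \<delta> z t) (at t within {a..cc t})"
      using sol[OF cc(1)[of t]] t cc(2)[of t] by auto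
    moreover have "at t within {a..cc t} = at t within {a..}"
      by (rule at_within_nhd[where S="{..<cc t}"]) (use cc(2)[of t] in auto)
    ultimately show "(z has_real_derivative delay_conv k f \<delta> z t) (at t within {a..})" by simp
  qed
qed

lemma global_delay_sol:
  fixes k f \<phi> :: "real \<Rightarrow> real"
  assumes kc: "continuous_on {0..\<delta>} k" and knn: "\<forall>\<rho>\<in>{0..\<delta>}. k \<rho> \<ge> 0" and \<delta>: "\<delta> > 0"
    and f_cont: "continuous_on {0<..} f" and f_pos: "\<forall>x>0. f x > 0"
    and f_asymp: "asymp_increasing f" and osgood: "osgood_condition f"
    and \<phi>c: "continuous_on {a-\<delta>..a} \<phi>" and \<phi>p: "\<forall>t\<in>{a-\<delta>..a}. \<phi> t > 0"
  shows "\<exists>z. delay_sol k f \<delta> a \<phi> {a..} z"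
proof -
  note local = local_delay_sol[OF kc knn \<delta> f_cont f_pos f_asymp osgood]
  define P where "P = (\<lambda>n::nat. delay_sol k f \<delta> a \<phi> {a..a + real n + 1})"
  define Q where "Q = (\<lambda>n::nat. \<lambda>z z' :: real \<Rightarrow> real. \<forall>t\<in>{a-\<delta>..a + real n + 1}. z' t = z t)"
  have "\<exists>Z. \<forall>n. P n (Z n) \<and> Q n (Z n) (Z (Suc n))"
  proof (rule dependent_nat_choice)
    show "\<exists>z. P 0 z" unfolding P_def using local[of 1 a \<phi>] \<phi>c \<phi>p by simp
  next
    fix z n assume Pz: "P n z"
    define b where "b = a + real n + 1"
    have ab: "a \<le> b" by (simp add: b_def)
    have s1: "delay_sol k f \<delta> a \<phi> {a..b} z" using Pz by (simp add: P_def b_def)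
    then have "continuous_on {b-\<delta>..b} z" "\<forall>t\<in>{b-\<delta>..b}. z t > 0"
      using ab \<delta> unfolding delay_sol_Icc_iff[OF ab less_imp_le[OF \<delta>]]
      by (auto intro: continuous_on_subset)
    then obtain z2 where s2: "delay_sol k f \<delta> b z {b..b+1} z2" using local[of 1 b z] by auto
    have "delay_sol k f \<delta> a \<phi> {a..b+1} (\<lambda>t. if t \<le> b then z t else z2 t)"
      by (rule delay_sol_glue[OF ab _ \<delta> s1 s2]) simp
    moreover have "b + 1 = a + real (Suc n) + 1" by (simp add: b_def)
    ultimately show "\<exists>y. P (Suc n) y \<and> Q n z y" unfolding P_def Q_def
      by (intro exI[of _ "\<lambda>t. if t \<le> b then z t else z2 t"]) (auto simp: b_def)
  qed
  then obtain Z where PZ: "\<And>n. P n (Z n)" and QZ: "\<And>n. Q n (Z n) (Z (Suc n))" by blast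
  have agree: "Z m t = Z n t" if "n \<le> m" "t \<in> {a-\<delta>..a + real n + 1}" for n m t
    using that(1)
  proof (induction m rule: dec_induct)
    case (step m)
    have "Z (Suc m) t = Z m t" using QZ[of m] that step by (auto simp: Q_def)
    then show ?case using step by simp
  qed simp
  define idx where "idx = (\<lambda>t. nat \<lceil>t - a\<rceil>)"
  have idx: "t < a + real (idx t) + 1" for t
    using real_nat_ceiling_ge[of "t - a"] by (simp add: idx_def)
  define z where "z = (\<lambda>t. Z (idx t) t)"
  have zZ: "z t = Z n t" if "t \<in> {a-\<delta>..a + real n + 1}" for n t
  proof -
    have "Z (max n (idx t)) t = Z n t" by (rule agree) (use that in auto)
    moreover have "Z (max n (idx t)) t = Z (idx t) t" by (rule agree) (use that idx[of t] in auto)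
    ultimately show ?thesis by (simp add: z_def)
  qed
  have "delay_sol k f \<delta> a \<phi> {a..c} z" if c: "a \<le> c" for c
  proof -
    define n where "n = idx c"
    have cn: "c \<le> a + real n + 1" using idx[of c] by (simp add: n_def)
    have "delay_sol k f \<delta> a \<phi> {a..c} (Z n)"
      by (rule delay_sol_Icc_restrict[OF PZ[of n, unfolded P_def] c cn]) (use \<delta> in simp)
    then show ?thesis by (rule delay_sol_Icc_cong) (use zZ[of _ n] cn c \<delta> in auto)
  qed
  then show ?thesis using delay_sol_Ici_of_Icc[of a k f \<delta> a \<phi> z] \<delta> by auto
qed

lemma delay_sol_Ico_iff:
  assumes "a < T" "0 \<le> \<delta>"
  shows "delay_sol k f \<delta> a \<phi> {a..<T} z \<longleftrightarrow>
    continuous_on {a-\<delta>..<T} z \<and> (\<forall>t\<in>{a-\<delta>..<T}. 0 < z t) \<and> (\<forall>t\<in>{a-\<delta>..a}. z t = \<phi> t) \<and>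
    (\<forall>t\<in>{a..<T}. (z has_real_derivative delay_conv k f \<delta> z t) (at t within {a..<T}))"
proof -
  have "{a-\<delta>..a} \<union> {a..<T} = {a-\<delta>..<T}" using assms by auto
  then show ?thesis by (simp add: delay_sol_def)
qed

lemma delay_sol_Ico_mono:
  fixes k f z :: "real \<Rightarrow> real"
  assumes kc: "continuous_on {0..\<delta>} k" and knn: "\<forall>\<rho>\<in>{0..\<delta>}. k \<rho> \<ge> 0" and \<delta>: "\<delta> > 0"
    and f_cont: "continuous_on {0<..} f" and f_pos: "\<forall>x>0. f x > 0"
    and sol: "delay_sol k f \<delta> a \<phi> {a..<T} z" and st: "a \<le> s" "s \<le> t" "t < T"
  shows "z s \<le> z t"
proof -
  have zc: "continuous_on {a-\<delta>..<T} z" and zp: "\<forall>t\<in>{a-\<delta>..<T}. 0 < z t"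
    and zd: "\<forall>t\<in>{a..<T}. (z has_real_derivative delay_conv k f \<delta> z t) (at t within {a..<T})"
    using sol st \<delta> delay_sol_Ico_iff[of a T \<delta>] by auto
  show ?thesis
  proof (rule DERIV_nonneg_imp_le_within[of a t z])
    show "continuous_on {a..t} z" by (rule continuous_on_subset[OF zc]) (use st \<delta> in auto)
    fix r assume r: "r \<in> {a..t}"
    show "(z has_real_derivative delay_conv k f \<delta> z r) (at r within {a..t})"
      by (rule has_field_derivative_subset[of _ _ _ "{a..<T}"]) (use zd r st in auto)
    show "0 \<le> delay_conv k f \<delta> z r"
      by (rule delay_conv_nonneg[OF kc knn f_cont f_pos]) (use zc zp r st in \<open>auto intro: continuous_on_subset\<close>)
  qed (use st in auto)
qed

lemma delay_sol_Ico_bounded: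
  fixes k f \<psi> z :: "real \<Rightarrow> real"
  assumes kc: "continuous_on {0..\<delta>} k" and knn: "\<forall>\<rho>\<in>{0..\<delta>}. k \<rho> \<ge> 0" and \<delta>: "\<delta> > 0"
    and f_cont: "continuous_on {0<..} f" and f_pos: "\<forall>x>0. f x > 0"
    and f_asymp: "asymp_increasing f" and osgood: "osgood_condition f"
    and \<psi>c: "continuous_on {a-\<delta>..a} \<psi>" and \<psi>p: "\<forall>t\<in>{a-\<delta>..a}. \<psi> t > 0"
    and T: "a < T" and sol: "delay_sol k f \<delta> a \<psi> {a..<T} z"
  obtains R where "\<And>t. t \<in> {a..<T} \<Longrightarrow> z t \<le> R"
proof -
  have zc: "continuous_on {a-\<delta>..<T} z" and zp: "\<forall>t\<in>{a-\<delta>..<T}. 0 < z t"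
    and zh: "\<forall>t\<in>{a-\<delta>..a}. z t = \<psi> t"
    and zd: "\<forall>t\<in>{a..<T}. (z has_real_derivative delay_conv k f \<delta> z t) (at t within {a..<T})"
    using sol T \<delta> delay_sol_Ico_iff[of a T \<delta>] by auto
  obtain m where m: "0 < m" "\<And>r. r \<in> {a-\<delta>..a} \<Longrightarrow> m \<le> \<psi> r"
    using continuous_on_Icc_pos_lower_bound[OF \<psi>c] \<psi>p by blast
  obtain M where M: "\<And>r. r \<in> {a-\<delta>..a} \<Longrightarrow> \<psi> r \<le> M"
    using continuous_on_Icc_upper_bound[OF \<psi>c] by blast
  have zm: "m \<le> z t" if "t \<in> {a-\<delta>..<T}" for t
  proof (cases "t \<le> a")
    case True then show ?thesis using zh m(2) that by auto
  next
    case False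
    then have "z a \<le> z t"
      using delay_sol_Ico_mono[OF kc knn \<delta> f_cont f_pos sol, of a t] that by auto
    then show ?thesis using zh m(2)[of a] \<delta> by auto
  qed
  obtain K where K: "0 < K" "\<And>\<rho>. \<rho> \<in> {0..\<delta>} \<Longrightarrow> k \<rho> \<le> K"
    using continuous_on_Icc_upper_bound[OF kc] by blast
  have "continuous_on {m..M} f" by (rule continuous_on_subset[OF f_cont]) (use m(1) in auto)
  then obtain FH where FH: "0 < FH" "\<And>y. y \<in> {m..M} \<Longrightarrow> f y \<le> FH"
    using continuous_on_Icc_upper_bound by blast
  define P0 where "P0 = \<delta> * FH + 1"
  have P0: "0 < P0" using \<delta> FH by (simp add: P0_def add_pos_pos)
  obtain R where R: "\<And>a' b z d t. a' \<le> b \<Longrightarrow> b - a' \<le> T - a \<Longrightarrow> continuous_on {a'..b} z \<Longrightarrow>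
      (\<And>t. t \<in> {a'..b} \<Longrightarrow> (z has_real_derivative d t) (at t within {a'..b})) \<Longrightarrow>
      (\<And>t. t \<in> {a'..b} \<Longrightarrow> d t \<le> K * (P0 + integral {a'..t} (\<lambda>s. f (z s)))) \<Longrightarrow>
      z a' \<le> \<psi> a \<Longrightarrow> (\<And>t. t \<in> {a'..b} \<Longrightarrow> z t \<ge> m) \<Longrightarrow> t \<in> {a'..b} \<Longrightarrow> z t \<le> R"
    by (rule uniform_apriori_bound[OF f_cont f_pos f_asymp osgood m(1) K(1) P0, of "T - a" "\<psi> a"]) blast
  show ?thesis
  proof (rule that)
    fix t assume t: "t \<in> {a..<T}"
    have zct: "continuous_on {a-\<delta>..t} z" by (rule continuous_on_subset[OF zc]) (use t in auto)
    show "z t \<le> R"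
    proof (rule R[of a t z "delay_conv k f \<delta> z"])
      show "continuous_on {a..t} z" by (rule continuous_on_subset[OF zct]) (use \<delta> in auto)
      fix s assume s: "s \<in> {a..t}"
      show "(z has_real_derivative delay_conv k f \<delta> z s) (at s within {a..t})"
        by (rule has_field_derivative_subset[of _ _ _ "{a..<T}"]) (use zd s t in auto)
      have Fc: "continuous_on {a-\<delta>..s} (\<lambda>r. f (z r))"
        by (rule continuous_on_compose2[OF f_cont continuous_on_subset[OF zct]]) (use zp s t in auto)
      have "lagged_conv k f \<delta> 0 z s \<le> K * (P0 + integral {a..s} (\<lambda>r. f (z r)))"
      proof (rule lagged_conv_le_history[where f=f and u=z, OF kc knn _ Fc])
        show "f (z r) \<le> FH" if "r \<in> {a-\<delta>..a}" for r using FH(2) m(2) M zh that by auto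
      qed (use K zp zm f_pos s t \<delta> in \<open>auto simp: P0_def less_imp_le\<close>)
      then show "delay_conv k f \<delta> z s \<le> K * (P0 + integral {a..s} (\<lambda>s. f (z s)))"
        by (simp add: lagged_conv_zero)
      show "m \<le> z s" using zm[of s] s t \<delta> by auto
    qed (use t zh \<delta> zm in auto)
  qed
qed

lemma delay_sol_Ico_close:
  fixes k f \<psi> z :: "real \<Rightarrow> real"
  assumes kc: "continuous_on {0..\<delta>} k" and knn: "\<forall>\<rho>\<in>{0..\<delta>}. k \<rho> \<ge> 0" and \<delta>: "\<delta> > 0"
    and f_cont: "continuous_on {0<..} f" and f_pos: "\<forall>x>0. f x > 0"
    and T: "a < T" and sol: "delay_sol k f \<delta> a \<psi> {a..<T} z" and zR: "\<And>t. t \<in> {a..<T} \<Longrightarrow> z t \<le> R"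
  shows "\<exists>zT. delay_sol k f \<delta> a \<psi> {a..T} (\<lambda>t. if t < T then z t else zT)"
proof -
  have zc: "continuous_on {a-\<delta>..<T} z" and zp: "\<forall>t\<in>{a-\<delta>..<T}. 0 < z t"
    and zh: "\<forall>t\<in>{a-\<delta>..a}. z t = \<psi> t"
    and zd: "\<forall>t\<in>{a..<T}. (z has_real_derivative delay_conv k f \<delta> z t) (at t within {a..<T})"
    using sol T \<delta> delay_sol_Ico_iff[of a T \<delta>] by auto
  define zT where "zT = (SUP t\<in>{a..<T}. z t)"
  have ztend: "(z \<longlongrightarrow> zT) (at_left T)" unfolding zT_def
    by (rule mono_bounded_tendsto_at_left[OF delay_sol_Ico_mono[OF kc knn \<delta> f_cont f_pos sol] zR T])
  have "0 < z a" using zp T \<delta> by simp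
  moreover have "z a \<le> zT"
    unfolding zT_def by (rule cSUP_upper) (use T zR in \<open>auto intro: bdd_aboveI[of _ R]\<close>)
  ultimately have zTpos: "0 < zT" by simp
  define z' where "z' = (\<lambda>t. if t < T then z t else zT)"
  have z'c: "continuous_on {a-\<delta>..T} z'"
    unfolding z'_def by (rule continuous_on_close_at_left[OF zc ztend]) (use T \<delta> in simp)
  have z'p: "0 < z' t" if "t \<in> {a-\<delta>..T}" for t using that zp zTpos by (auto simp: z'_def)
  define g where "g = delay_conv k f \<delta> z'"
  have gc: "continuous_on {a..T} g"
  proof -
    have "continuous_on {a-\<delta>..T} (\<lambda>r. f (z' r))"
      by (rule continuous_on_compose2[OF f_cont z'c]) (use z'p in auto)
    then have "continuous_on {a..T} (lagged_conv k f \<delta> 0 z')"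
      by (rule continuous_on_lagged_conv[where f=f and u=z', OF kc]) auto
    then show ?thesis unfolding g_def by (simp add: lagged_conv_zero[abs_def])
  qed
  have zeq1: "z t = \<psi> a + integral {a..t} g" if t: "t \<in> {a..<T}" for t
  proof -
    have "(delay_conv k f \<delta> z has_integral (z t - z a)) {a..t}"
    proof (rule fundamental_theorem_of_calculus)
      fix s assume s: "s \<in> {a..t}"
      have "(z has_real_derivative delay_conv k f \<delta> z s) (at s within {a..t})"
        by (rule has_field_derivative_subset[of _ _ _ "{a..<T}"]) (use zd s t in auto)
      then show "(z has_vector_derivative delay_conv k f \<delta> z s) (at s within {a..t})"
        by (simp add: has_real_derivative_iff_has_vector_derivative)
    qed (use t in auto)
    moreover have "integral {a..t} g = integral {a..t} (delay_conv k f \<delta> z)"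
      unfolding g_def by (rule integral_cong, rule delay_conv_cong) (use t in \<open>auto simp: z'_def\<close>)
    ultimately show ?thesis using zh T \<delta> by (simp add: integral_unique)
  qed
  have zeq: "z' t = \<psi> a + integral {a..t} g" if t: "t \<in> {a..T}" for t
  proof (cases "t < T")
    case True then show ?thesis using zeq1[of t] t by (simp add: z'_def)
  next
    case False
    then have tT: "t = T" using t by simp
    define I where "I = (\<lambda>t. \<psi> a + integral {a..t} g)"
    have "continuous_on {a..T} I" unfolding I_def
      by (intro continuous_intros indefinite_integral_continuous_1 integrable_continuous_interval gc)
    then have "continuous (at T within {a..T}) I" using T by (simp add: continuous_on_eq_continuous_within)
    moreover have "at T within {a..T} = at_left T" by (rule at_within_Icc_at_left) (use T in auto)
    ultimately have "(I \<longlongrightarrow> I T) (at_left T)" by (simp add: continuous_within)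
    moreover have "\<forall>\<^sub>F x in at_left T. I x = z x"
      using eventually_at_left_real[OF T] by (rule eventually_mono) (auto simp: I_def zeq1)
    ultimately have "(z \<longlongrightarrow> I T) (at_left T)" using tendsto_cong by blast
    from tendsto_unique[OF trivial_limit_at_left_real ztend this]
    show ?thesis using tT by (simp add: z'_def I_def)
  qed
  have "delay_sol k f \<delta> a \<psi> {a..T} z'"
    unfolding delay_sol_Icc_iff[OF less_imp_le[OF T] less_imp_le[OF \<delta>]]
  proof (intro conjI ballI)
    fix t assume t: "t \<in> {a..T}"
    from integral_equation_imp_has_derivative[OF gc zeq t]
    show "(z' has_real_derivative delay_conv k f \<delta> z' t) (at t within {a..T})" by (simp add: g_def)
  qed (use z'c z'p zh T in \<open>auto simp: z'_def\<close>)
  then show ?thesis unfolding z'_def by blast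
qed

lemma delay_sol_Ici_restrict:
  assumes sol: "delay_sol k f \<delta> a \<phi> {a..} z" and c: "a \<le> c" and \<delta>: "0 \<le> \<delta>"
  shows "delay_sol k f \<delta> a \<phi> {a..c} z"
proof -
  have "{a-\<delta>..a} \<union> {a..} = {a-\<delta>..}" using \<delta> by auto
  then have zc: "continuous_on {a-\<delta>..} z" and zp: "\<forall>t\<in>{a-\<delta>..}. 0 < z t"
    and zh: "\<forall>t\<in>{a-\<delta>..a}. z t = \<phi> t"
    and zd: "\<forall>t\<in>{a..}. (z has_real_derivative delay_conv k f \<delta> z t) (at t within {a..})"
    using sol unfolding delay_sol_def by auto
  show ?thesis unfolding delay_sol_Icc_iff[OF c \<delta>]
  proof (intro conjI ballI)
    show "continuous_on {a-\<delta>..c} z" by (rule continuous_on_subset[OF zc]) auto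
    fix t assume "t \<in> {a..c}"
    then show "(z has_real_derivative delay_conv k f \<delta> z t) (at t within {a..c})"
      using zd by (auto intro: has_field_derivative_subset)
  qed (use zp zh in auto)
qed

lemma delay_sol_extend:
  fixes k f \<psi> z :: "real \<Rightarrow> real"
  assumes kc: "continuous_on {0..\<delta>} k" and knn: "\<forall>\<rho>\<in>{0..\<delta>}. k \<rho> \<ge> 0" and \<delta>: "\<delta> > 0"
    and f_cont: "continuous_on {0<..} f" and f_pos: "\<forall>x>0. f x > 0"
    and f_asymp: "asymp_increasing f" and osgood: "osgood_condition f"
    and \<psi>c: "continuous_on {a-\<delta>..a} \<psi>" and \<psi>p: "\<forall>t\<in>{a-\<delta>..a}. \<psi> t > 0"
    and T: "a < T" and sol: "delay_sol k f \<delta> a \<psi> {a..<T} z"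
  shows "\<exists>z'. delay_sol k f \<delta> a \<psi> {a..} z' \<and> (\<forall>t\<in>{a-\<delta>..<T}. z' t = z t)"
proof -
  obtain R where "\<And>t. t \<in> {a..<T} \<Longrightarrow> z t \<le> R"
    using delay_sol_Ico_bounded[OF kc knn \<delta> f_cont f_pos f_asymp osgood \<psi>c \<psi>p T sol] by blast
  then obtain zT where sol1: "delay_sol k f \<delta> a \<psi> {a..T} (\<lambda>t. if t < T then z t else zT)"
    using delay_sol_Ico_close[OF kc knn \<delta> f_cont f_pos T sol] by blast
  define z1 where "z1 = (\<lambda>t. if t < T then z t else zT)"
  have "continuous_on {T-\<delta>..T} z1" "\<forall>t\<in>{T-\<delta>..T}. 0 < z1 t"
    using sol1 T \<delta> delay_sol_Icc_iff[of a T \<delta> k f \<psi> z1]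
    by (auto simp: z1_def intro: continuous_on_subset)
  then obtain w where w: "delay_sol k f \<delta> T z1 {T..} w"
    using global_delay_sol[OF kc knn \<delta> f_cont f_pos f_asymp osgood] by blast
  define z' where "z' = (\<lambda>t. if t \<le> T then z1 t else w t)"
  have "delay_sol k f \<delta> a \<psi> {a..c} z'" if c: "T \<le> c" for c
    unfolding z'_def
    by (rule delay_sol_glue[OF less_imp_le[OF T] c \<delta> sol1[folded z1_def] delay_sol_Ici_restrict[OF w c]])
       (use \<delta> in simp)
  then have "delay_sol k f \<delta> a \<psi> {a..} z'"
    by (rule delay_sol_Ici_of_Icc) (use T \<delta> in auto)
  moreover have "\<forall>t\<in>{a-\<delta>..<T}. z' t = z t" by (simp add: z'_def z1_def)
  ultimately show ?thesis by blast
qed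

lemma dde_sol1_iff_delay_sol: "dde_sol1 C \<delta> f \<psi> I z \<longleftrightarrow> delay_sol (\<lambda>_. C) f \<delta> 0 \<psi> I z"
  by (simp add: dde_sol1_def delay_sol_def delay_conv_def)

lemma dde_sol2_iff_delay_sol: "dde_sol2 \<delta> w f \<psi> I y \<longleftrightarrow> delay_sol w f \<delta> 0 \<psi> I y"
  by (simp add: dde_sol2_def delay_sol_def delay_conv_def)

theorem lemma6p4:
  fixes C \<delta> :: real and f \<psi> w :: "real \<Rightarrow> real"
  assumes C_pos: "C > 0" and delta_pos: "\<delta> > 0"
    and f_cont: "continuous_on {0<..} f" and f_pos: "\<forall>x>0. f x > 0"
    and f_asymp: "asymp_increasing f"
    and f_superlin: "filterlim (\<lambda>x. f x / x) at_top at_top"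
    and psi_cont: "continuous_on {-\<delta>..0} \<psi>" and psi_pos: "\<forall>t\<in>{-\<delta>..0}. \<psi> t > 0"
    and osgood: "\<forall>\<eta>>0. (\<integral>\<^sup>+ u\<in>{\<eta><..}.
        ennreal (1 / sqrt (enn2real (\<integral>\<^sup>+ s\<in>{0<..u}. ennreal (f s) \<partial>lborel))) \<partial>lborel) = \<infinity>"
  shows "((\<exists>z. dde_sol1 C \<delta> f \<psi> {0..} z) \<and>
          (\<forall>T z. T > 0 \<and> dde_sol1 C \<delta> f \<psi> {0..<T} z \<longrightarrow>
             (\<exists>z'. dde_sol1 C \<delta> f \<psi> {0..} z' \<and> (\<forall>t\<in>{-\<delta>..<T}. z' t = z t))))
       \<and> (continuous_on {0..} w \<and> (\<forall>t\<ge>0. w t \<ge> 0) \<and> w 0 > 0 \<longrightarrow>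
          (\<exists>y. dde_sol2 \<delta> w f \<psi> {0..} y) \<and>
          (\<forall>T y. T > 0 \<and> dde_sol2 \<delta> w f \<psi> {0..<T} y \<longrightarrow>
             (\<exists>y'. dde_sol2 \<delta> w f \<psi> {0..} y' \<and> (\<forall>t\<in>{-\<delta>..<T}. y' t = y t))))"
proof -
  have osg: "osgood_condition f" using osgood unfolding osgood_condition_def .
  have psi: "continuous_on {0-\<delta>..0} \<psi>" "\<forall>t\<in>{0-\<delta>..0}. \<psi> t > 0" using psi_cont psi_pos by simp_all
  have kernel: "(\<exists>z. delay_sol k f \<delta> 0 \<psi> {0..} z) \<and>
      (\<forall>T z. T > 0 \<and> delay_sol k f \<delta> 0 \<psi> {0..<T} z \<longrightarrow>
         (\<exists>z'. delay_sol k f \<delta> 0 \<psi> {0..} z' \<and> (\<forall>t\<in>{-\<delta>..<T}. z' t = z t)))"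
    if "continuous_on {0..\<delta>} k" "\<forall>\<rho>\<in>{0..\<delta>}. 0 \<le> k \<rho>" for k
    using global_delay_sol[OF that delta_pos f_cont f_pos f_asymp osg psi]
      delay_sol_extend[OF that delta_pos f_cont f_pos f_asymp osg psi] by auto
  have "continuous_on {0..\<delta>} (\<lambda>_. C)" "\<forall>\<rho>\<in>{0..\<delta>}. 0 \<le> (\<lambda>_. C) \<rho>" using C_pos by auto
  moreover have "continuous_on {0..\<delta>} w" "\<forall>\<rho>\<in>{0..\<delta>}. 0 \<le> w \<rho>"
    if "continuous_on {0..} w \<and> (\<forall>t\<ge>0. w t \<ge> 0)" using that by (auto intro: continuous_on_subset)
  ultimately show ?thesis
    unfolding dde_sol1_iff_delay_sol dde_sol2_iff_delay_sol using kernel by blast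
qed

end
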